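(* Let $a<b$, $\alpha,\beta\in(0,1)$, $\xi,y_a,y_b\in\mathbb R$, $F,G\in C^1([a,b]\times\mathbb R^2;\mathbb R)$. Consider $$\mathcal J(y)={}_aI_b^\alpha\big[t\mapsto F(t,y(t),{}^C_aD_t^\beta[y](t))\big](b)\to\min,\quad \mathcal I(y)={}_aI_b^\alpha\big[t\mapsto G(t,y(t),{}^C_aD_t^\beta[y](t))\big](b)=\xi,\quad y(a)=y_a,\ y(b)=y_b,$$ over $y\in C^1([a,b])$ with ${}^C_aD_t^\beta[y]$ continuous on $[a,b]$. Let $y$ be a minimizer, write $[y](t)=(t,y(t),{}^C_aD_t^\beta[y](t))$, and assume for $L\in\{F,G\}$, with $g_L(t)=(b-t)^{\alpha-1}\partial_3L([y](t))$: $t\mapsto(b-t)^{\alpha-1}\partial_2L([y](t))$ and ${}_tD_b^\beta[g_L]$ are continuous on $(a,b)$; ${}_tI_b^{1-\beta}[g_L]$ is absolutely continuous on $[a,b]$; and either the kernel $(t,\tau)\mapsto(t-\tau)^{-\beta}/\Gamma(1-\beta)$ is square integrable on $\{a\le\tau<t\le b\}$ and $g_L\in L_2([a,b])$, or $g_L$ is continuous on $[a,b]$. If $y$ is not an extremal of $\mathcal I$, i.e. it is not true that $(b-t)^{\alpha-1}\partial_2G([y](t))+{}_tD_b^\beta[g_G](t)=0$ for all $t\in(a,b)$, then there exists $\lambda\in\mathbb R$ such that, with $H=F-\lambda G$, $$(b-t)^{\alpha-1}\partial_2H([y](t))+{}_tD_b^\beta\big[\tau\mapsto(b-\tau)^{\alpha-1}\partial_3H([y](\tau))\big](t)=0\quad\text{for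 all }t\in(a,b).$$
   Context: $\partial_iL$ denotes the partial derivative in the $i$-th argument. For $\mu\in(0,1)$: ${}_aI_t^\mu[f](t)=\frac1{\Gamma(\mu)}\int_a^t(t-\tau)^{\mu-1}f(\tau)d\tau$, ${}_tI_b^\mu[f](t)=\frac1{\Gamma(\mu)}\int_t^b(\tau-t)^{\mu-1}f(\tau)d\tau$, ${}_tD_b^\mu[f](t)=-\frac{d}{dt}{}_tI_b^{1-\mu}[f](t)$, ${}^C_aD_t^\mu[f](t)={}_aI_t^{1-\mu}[f'](t)$. ${}_aI_b^\alpha[h](b)$ means $\frac1{\Gamma(\alpha)}\int_a^b(b-t)^{\alpha-1}h(t)dt$. *)

theory Defs
  imports "HOL-Analysis.Analysis"
begin

definition lRLI :: "real \<Rightarrow> real \<Rightarrow> (real \<Rightarrow> real) \<Rightarrow> real \<Rightarrow> real" where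
  "lRLI mu a f t = (1 / Gamma mu) * integral {a..t} (\<lambda>\<tau>. (t - \<tau>) powr (mu - 1) * f \<tau>)"

definition rRLI :: "real \<Rightarrow> real \<Rightarrow> (real \<Rightarrow> real) \<Rightarrow> real \<Rightarrow> real" where
  "rRLI mu b f t = (1 / Gamma mu) * integral {t..b} (\<lambda>\<tau>. (\<tau> - t) powr (mu - 1) * f \<tau>)"

definition rRLD :: "real \<Rightarrow> real \<Rightarrow> (real \<Rightarrow> real) \<Rightarrow> real \<Rightarrow> real" where
  "rRLD mu b f t = - deriv (\<lambda>s. rRLI (1 - mu) b f s) t"

definition lCD :: "real \<Rightarrow> real \<Rightarrow> (real \<Rightarrow> real) \<Rightarrow> real \<Rightarrow> real" where
  "lCD mu a f t = lRLI (1 - mu) a (deriv f) t"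

definition d2 :: "(real \<Rightarrow> real \<Rightarrow> real \<Rightarrow> real) \<Rightarrow> real \<Rightarrow> real \<Rightarrow> real \<Rightarrow> real" where
  "d2 L t x v = deriv (\<lambda>z. L t z v) x"

definition d3 :: "(real \<Rightarrow> real \<Rightarrow> real \<Rightarrow> real) \<Rightarrow> real \<Rightarrow> real \<Rightarrow> real \<Rightarrow> real" where
  "d3 L t x v = deriv (\<lambda>w. L t x w) v"

definition C1_3 :: "real set \<Rightarrow> (real \<Rightarrow> real \<Rightarrow> real \<Rightarrow> real) \<Rightarrow> bool" where
  "C1_3 S L \<longleftrightarrow> (\<exists>L1 L2 L3.
     (\<forall>t\<in>S. \<forall>x v.
        ((\<lambda>s. L s x v) has_real_derivative L1 t x v) (at t within S) \<and>
        ((\<lambda>z. L t z v) has_real_derivative L2 t x v) (at x) \<and>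
        ((\<lambda>w. L t x w) has_real_derivative L3 t x v) (at v)) \<and>
     continuous_on (S \<times> UNIV \<times> UNIV) (\<lambda>(t, x, v). L1 t x v) \<and>
     continuous_on (S \<times> UNIV \<times> UNIV) (\<lambda>(t, x, v). L2 t x v) \<and>
     continuous_on (S \<times> UNIV \<times> UNIV) (\<lambda>(t, x, v). L3 t x v))"

definition C1_interval :: "real \<Rightarrow> real \<Rightarrow> (real \<Rightarrow> real) \<Rightarrow> bool" where
  "C1_interval a b y \<longleftrightarrow> (\<exists>y'. (\<forall>t\<in>{a..b}. (y has_real_derivative y' t) (at t within {a..b}))
      \<and> continuous_on {a..b} y')"

definition abs_cont_on :: "real \<Rightarrow> real \<Rightarrow> (real \<Rightarrow> real) \<Rightarrow> bool" where
  "abs_cont_on a b f \<longleftrightarrow> (\<forall>e>0. \<exists>d>0. \<forall>n::nat. \<forall>s u :: nat \<Rightarrow> real.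
     (\<forall>i<n. a \<le> s i \<and> s i \<le> u i \<and> u i \<le> b) \<and>
     (\<forall>i<n. \<forall>j<n. i \<noteq> j \<longrightarrow> u i \<le> s j \<or> u j \<le> s i) \<and>
     (\<Sum>i<n. u i - s i) < d \<longrightarrow> (\<Sum>i<n. \<bar>f (u i) - f (s i)\<bar>) < e)"

definition admissible :: "real \<Rightarrow> real \<Rightarrow> real \<Rightarrow> real \<Rightarrow> real \<Rightarrow> real \<Rightarrow>
    (real \<Rightarrow> real \<Rightarrow> real \<Rightarrow> real) \<Rightarrow> real \<Rightarrow> (real \<Rightarrow> real) \<Rightarrow> bool" where
  "admissible a b alpha beta ya yb G xi y \<longleftrightarrow>
     C1_interval a b y \<and> continuous_on {a..b} (lCD beta a y) \<and>
     y a = ya \<and> y b = yb \<and>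
     lRLI alpha a (\<lambda>t. G t (y t) (lCD beta a y t)) b = xi"

end

theory Submission
  imports Defs
begin

text \<open>
  Perturb the minimiser along two test functions, \<open>z = y + e\<^sub>1 \<eta>\<^sub>1 + e\<^sub>2 \<eta>\<^sub>2\<close>. Both functionals
  are differentiable in \<open>(e\<^sub>1, e\<^sub>2)\<close> at the origin. Since \<open>y\<close> is not an extremal of the
  constraint, \<open>\<eta>\<^sub>2\<close> can be chosen so that the constraint has a non-zero partial derivative in
  \<open>e\<^sub>2\<close>; the intermediate value theorem then provides points of the constraint set in every
  direction \<open>e\<^sub>1\<close>, and minimality forces the two gradients to be parallel. This gives one
  multiplier \<open>\<lambda>\<close> for all \<open>\<eta>\<^sub>1\<close>. Fractional integration by parts (Fubini on the triangle
  \<open>a \<le> \<tau> \<le> t \<le> b\<close> followed by the fundamental theorem of calculus) turns every first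
  variation into the integral of \<open>\<eta>\<close> against the Euler--Lagrange expression, and the
  fundamental lemma of the calculus of variations, applied with bump functions, yields
  \<open>E\<^sub>F - \<lambda> E\<^sub>G = 0\<close> on \<open>(a, b)\<close>.
\<close>

section \<open>Integrals against singular power kernels\<close>

lemma has_integral_powr_diff_left:
  fixes a t p :: real
  assumes "a \<le> t" "p > -1"
  shows "((\<lambda>\<tau>. (t - \<tau>) powr p) has_integral (t - a) powr (p + 1) / (p + 1)) {a..t}"
proof -
  have "((\<lambda>x. x powr p) has_integral (t - a) powr (p + 1) / (p + 1)) {0..t-a}"
    using has_integral_powr_from_0[of p "t-a"] assms by simp
  then have "((\<lambda>x. (-x) powr p) has_integral (t - a) powr (p + 1) / (p + 1)) {-(t-a)..-0}"
    using has_integral_reflect_real[of "\<lambda>x. x powr p"] by blast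
  then have "((\<lambda>x. (\<lambda>x. (-x) powr p) (1 *\<^sub>R x + (-t))) has_integral ((t - a) powr (p + 1) / (p + 1)) /\<^sub>R 1 ^ DIM(real))
        (cbox ((-(t-a) - (-t)) /\<^sub>R 1) ((-0 - (-t)) /\<^sub>R 1))"
    by (subst has_integral_affinity_iff) auto
  then show ?thesis by simp
qed

lemma has_integral_powr_diff_right:
  fixes \<tau> b p :: real
  assumes "\<tau> \<le> b" "p > -1"
  shows "((\<lambda>t. (t - \<tau>) powr p) has_integral (b - \<tau>) powr (p + 1) / (p + 1)) {\<tau>..b}"
proof -
  have "((\<lambda>x. x powr p) has_integral (b - \<tau>) powr (p + 1) / (p + 1)) {0..b-\<tau>}"
    using has_integral_powr_from_0[of p "b-\<tau>"] assms by simp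
  then have "((\<lambda>x. (\<lambda>x. x powr p) (1 *\<^sub>R x + (-\<tau>))) has_integral ((b - \<tau>) powr (p + 1) / (p + 1)) /\<^sub>R 1 ^ DIM(real))
        (cbox ((0 - (-\<tau>)) /\<^sub>R 1) ((b - \<tau> - (-\<tau>)) /\<^sub>R 1))"
    by (subst has_integral_affinity_iff) auto
  then show ?thesis by simp
qed

lemma absolutely_integrable_mult_continuous:
  fixes k f :: "real \<Rightarrow> real"
  assumes "k absolutely_integrable_on {c..d}" "continuous_on {c..d} f"
  shows "(\<lambda>x. k x * f x) absolutely_integrable_on {c..d}"
proof -
  have "(\<lambda>x. f x * k x) absolutely_integrable_on {c..d}"
  proof (rule absolutely_integrable_bounded_measurable_product_real)
    show "f \<in> borel_measurable (lebesgue_on {c..d})"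
      by (rule continuous_imp_measurable_on_sets_lebesgue[OF assms(2)]) auto
    show "bounded (f ` {c..d})"
      by (intro compact_imp_bounded compact_continuous_image assms(2) compact_Icc)
  qed (use assms(1) in auto)
  then show ?thesis by (simp add: mult.commute)
qed

lemma abs_integral_mult_continuous_le:
  fixes k f :: "real \<Rightarrow> real"
  assumes k: "k integrable_on {c..d}" "\<And>x. x \<in> {c..d} \<Longrightarrow> 0 \<le> k x"
    and f: "continuous_on {c..d} f" "\<And>x. x \<in> {c..d} \<Longrightarrow> \<bar>f x\<bar> \<le> B"
  shows "\<bar>integral {c..d} (\<lambda>x. k x * f x)\<bar> \<le> B * integral {c..d} k"
proof -
  have "(\<lambda>x. k x * f x) integrable_on {c..d}"
    using absolutely_integrable_mult_continuous[OF nonnegative_absolutely_integrable_1[OF k] f(1)]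
    by (simp add: absolutely_integrable_on_def)
  then have "norm (integral {c..d} (\<lambda>x. k x * f x)) \<le> integral {c..d} (\<lambda>x. B * k x)"
  proof (rule integral_norm_bound_integral)
    show "(\<lambda>x. B * k x) integrable_on {c..d}" by (rule integrable_on_mult_right[OF k(1)])
    fix x assume x: "x \<in> {c..d}"
    have "\<bar>k x * f x\<bar> = k x * \<bar>f x\<bar>" using k(2)[OF x] by (simp add: abs_mult)
    also have "\<dots> \<le> k x * B" by (intro mult_left_mono f(2) k(2) x)
    finally show "norm (k x * f x) \<le> B * k x" by (simp add: mult.commute)
  qed
  then show ?thesis by simp
qed

lemma absolutely_integrable_powr_diff_mult:
  fixes f :: "real \<Rightarrow> real"
  assumes "a \<le> t" "p > -1" "continuous_on {a..t} f"
  shows "(\<lambda>\<tau>. (t - \<tau>) powr p * f \<tau>) absolutely_integrable_on {a..t}"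
  using has_integral_powr_diff_left[OF assms(1,2)] assms(3)
  by (intro absolutely_integrable_mult_continuous nonnegative_absolutely_integrable_1) auto

lemma integrable_powr_diff_mult:
  fixes f :: "real \<Rightarrow> real"
  assumes "a \<le> t" "p > -1" "continuous_on {a..t} f"
  shows "(\<lambda>\<tau>. (t - \<tau>) powr p * f \<tau>) integrable_on {a..t}"
  using absolutely_integrable_powr_diff_mult[OF assms] absolutely_integrable_on_def by blast

lemma abs_integral_powr_diff_mult_le:
  fixes f :: "real \<Rightarrow> real"
  assumes "a \<le> t" "p > -1" "continuous_on {a..t} f" "\<And>\<tau>. \<tau> \<in> {a..t} \<Longrightarrow> \<bar>f \<tau>\<bar> \<le> B"
  shows "\<bar>integral {a..t} (\<lambda>\<tau>. (t - \<tau>) powr p * f \<tau>)\<bar> \<le> B * ((t - a) powr (p + 1) / (p + 1))"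
proof -
  have "\<bar>integral {a..t} (\<lambda>\<tau>. (t - \<tau>) powr p * f \<tau>)\<bar> \<le> B * integral {a..t} (\<lambda>\<tau>. (t - \<tau>) powr p)"
    using has_integral_powr_diff_left[OF assms(1,2)] by (intro abs_integral_mult_continuous_le assms(3,4)) auto
  then show ?thesis using has_integral_powr_diff_left[OF assms(1,2)] by (simp add: integral_unique)
qed

lemma continuous_on_Icc_bound:
  fixes f :: "real \<Rightarrow> real"
  assumes "continuous_on {a..b} f"
  obtains M where "M \<ge> 0" "\<And>t. t \<in> {a..b} \<Longrightarrow> \<bar>f t\<bar> \<le> M"
proof -
  have "bounded (f ` {a..b})" by (intro compact_imp_bounded compact_continuous_image assms compact_Icc)
  then obtain M where "\<And>t. t \<in> {a..b} \<Longrightarrow> \<bar>f t\<bar> \<le> M"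
    unfolding bounded_iff by (metis imageI real_norm_def)
  then show ?thesis using that[of "max M 0"] by force
qed

lemma abs_diff_linear_le:
  fixes f f' :: "real \<Rightarrow> real"
  assumes f': "\<And>s. s \<in> closed_segment x (x + h) \<Longrightarrow> (f has_real_derivative f' s) (at s)"
    and bound: "\<And>s. s \<in> closed_segment x (x + h) \<Longrightarrow> \<bar>f' s - c\<bar> \<le> e"
  shows "\<bar>f (x + h) - f x - c * h\<bar> \<le> e * \<bar>h\<bar>"
proof -
  have "norm ((\<lambda>s. f s - c * s) (x + h) - (\<lambda>s. f s - c * s) x) \<le> e * norm (x + h - x)"
  proof (rule field_differentiable_bound[OF convex_closed_segment])
    fix s assume s: "s \<in> closed_segment x (x + h)"
    have "((\<lambda>s. f s - c * s) has_real_derivative f' s - c * 1) (at s)"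
      by (intro DERIV_diff DERIV_cmult f'[OF s] DERIV_ident)
    then show "((\<lambda>s. f s - c * s) has_real_derivative f' s - c) (at s within closed_segment x (x + h))"
      by (simp add: has_field_derivative_at_within)
  qed (use bound in auto)
  then show ?thesis by (simp add: algebra_simps)
qed

section \<open>Integrands of class \<open>C\<^sup>1\<close>\<close>

lemma C1_3_has_derivative_d2:
  assumes "C1_3 S L" "t \<in> S"
  shows "((\<lambda>z. L t z v) has_real_derivative d2 L t x v) (at x)"
proof -
  obtain L2 where "\<forall>t\<in>S. \<forall>x v. ((\<lambda>z. L t z v) has_real_derivative L2 t x v) (at x)"
    using assms(1) unfolding C1_3_def by blast
  then show ?thesis using assms(2) unfolding d2_def by (metis DERIV_imp_deriv)
qed

lemma C1_3_has_derivative_d3: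
  assumes "C1_3 S L" "t \<in> S"
  shows "((\<lambda>w. L t x w) has_real_derivative d3 L t x v) (at v)"
proof -
  obtain L3 where "\<forall>t\<in>S. \<forall>x v. ((\<lambda>w. L t x w) has_real_derivative L3 t x v) (at v)"
    using assms(1) unfolding C1_3_def by blast
  then show ?thesis using assms(2) unfolding d3_def by (metis DERIV_imp_deriv)
qed

lemma C1_3_continuous_d2:
  assumes "C1_3 S L"
  shows "continuous_on (S \<times> UNIV \<times> UNIV) (\<lambda>(t, x, v). d2 L t x v)"
proof -
  obtain L2 where D: "\<forall>t\<in>S. \<forall>x v. ((\<lambda>z. L t z v) has_real_derivative L2 t x v) (at x)"
    and C: "continuous_on (S \<times> UNIV \<times> UNIV) (\<lambda>(t, x, v). L2 t x v)"
    using assms unfolding C1_3_def by blast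
  show ?thesis
    by (rule continuous_on_eq[OF C]) (use D in \<open>auto simp: d2_def intro: DERIV_imp_deriv[symmetric]\<close>)
qed

lemma C1_3_continuous_d3:
  assumes "C1_3 S L"
  shows "continuous_on (S \<times> UNIV \<times> UNIV) (\<lambda>(t, x, v). d3 L t x v)"
proof -
  obtain L3 where D: "\<forall>t\<in>S. \<forall>x v. ((\<lambda>w. L t x w) has_real_derivative L3 t x v) (at v)"
    and C: "continuous_on (S \<times> UNIV \<times> UNIV) (\<lambda>(t, x, v). L3 t x v)"
    using assms unfolding C1_3_def by blast
  show ?thesis
    by (rule continuous_on_eq[OF C]) (use D in \<open>auto simp: d3_def intro: DERIV_imp_deriv[symmetric]\<close>)
qed

lemma C1_3_continuous_within_time:
  assumes "C1_3 S L" "t \<in> S"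
  shows "continuous (at t within S) (\<lambda>s. L s x v)"
proof -
  obtain L1 where "\<forall>t\<in>S. \<forall>x v. ((\<lambda>s. L s x v) has_real_derivative L1 t x v) (at t within S)"
    using assms(1) unfolding C1_3_def by blast
  then show ?thesis using assms(2) DERIV_continuous by blast
qed

lemma d2_diff_scaled:
  assumes "C1_3 S F" "C1_3 S G" "t \<in> S"
  shows "d2 (\<lambda>s x v. F s x v - c * G s x v) t x v = d2 F t x v - c * d2 G t x v"
  unfolding d2_def[of "\<lambda>s x v. F s x v - c * G s x v"]
  by (intro DERIV_imp_deriv DERIV_diff DERIV_cmult C1_3_has_derivative_d2[OF assms(1,3)]
      C1_3_has_derivative_d2[OF assms(2,3)])

lemma d3_diff_scaled:
  assumes "C1_3 S F" "C1_3 S G" "t \<in> S"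
  shows "d3 (\<lambda>s x v. F s x v - c * G s x v) t x v = d3 F t x v - c * d3 G t x v"
  unfolding d3_def[of "\<lambda>s x v. F s x v - c * G s x v"]
  by (intro DERIV_imp_deriv DERIV_diff DERIV_cmult C1_3_has_derivative_d3[OF assms(1,3)]
      C1_3_has_derivative_d3[OF assms(2,3)])

lemma continuous_on_compose_slab:
  fixes K :: "real \<Rightarrow> real \<Rightarrow> real \<Rightarrow> real"
  assumes "continuous_on (S \<times> UNIV \<times> UNIV) (\<lambda>(t, x, v). K t x v)"
    and "continuous_on S X" "continuous_on S V"
  shows "continuous_on S (\<lambda>t. K t (X t) (V t))"
  using continuous_on_compose2[OF assms(1) continuous_on_Pair[OF continuous_on_id continuous_on_Pair[OF assms(2,3)]]]
  by auto

lemma uniformly_continuous_on_slab: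
  fixes K :: "real \<Rightarrow> real \<Rightarrow> real \<Rightarrow> real"
  assumes cont: "continuous_on ({a..b} \<times> UNIV \<times> UNIV) (\<lambda>(t, x, v). K t x v)" and e: "e > 0"
  obtains d where "d > 0" "\<And>t x v x' v'. t \<in> {a..b} \<Longrightarrow> \<bar>x\<bar> \<le> R \<Longrightarrow> \<bar>v\<bar> \<le> R \<Longrightarrow> \<bar>x'\<bar> \<le> R \<Longrightarrow> \<bar>v'\<bar> \<le> R \<Longrightarrow>
      \<bar>x' - x\<bar> + \<bar>v' - v\<bar> < d \<Longrightarrow> \<bar>K t x' v' - K t x v\<bar> < e"
proof -
  define C :: "(real \<times> real \<times> real) set" where "C = {a..b} \<times> cball 0 R \<times> cball 0 R"
  have "uniformly_continuous_on C (\<lambda>(t, x, v). K t x v)"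
    unfolding C_def
    by (intro compact_uniformly_continuous continuous_on_subset[OF cont] compact_Times compact_Icc compact_cball) auto
  then obtain d where d: "d > 0" and dd: "\<And>p p'. p \<in> C \<Longrightarrow> p' \<in> C \<Longrightarrow> dist p' p < d \<Longrightarrow>
      dist ((\<lambda>(t, x, v). K t x v) p') ((\<lambda>(t, x, v). K t x v) p) < e"
    unfolding uniformly_continuous_on_def using e by metis
  show ?thesis
  proof (rule that[OF d])
    fix t x v x' v' assume t: "t \<in> {a..b}" and R: "\<bar>x\<bar> \<le> R" "\<bar>v\<bar> \<le> R" "\<bar>x'\<bar> \<le> R" "\<bar>v'\<bar> \<le> R"
      and close: "\<bar>x' - x\<bar> + \<bar>v' - v\<bar> < d"
    have "dist (t, x', v') (t, x, v) = sqrt ((dist x' x)\<^sup>2 + (dist v' v)\<^sup>2)"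
      by (simp add: dist_Pair_Pair)
    also have "\<dots> \<le> \<bar>x' - x\<bar> + \<bar>v' - v\<bar>"
      using sqrt_sum_squares_le_sum_abs by (simp add: dist_real_def)
    finally have "dist (t, x', v') (t, x, v) < d" using close by linarith
    from dd[OF _ _ this] t R show "\<bar>K t x' v' - K t x v\<bar> < e"
      by (auto simp: C_def dist_real_def)
  qed
qed

lemma bounded_on_slab:
  fixes K :: "real \<Rightarrow> real \<Rightarrow> real \<Rightarrow> real"
  assumes cont: "continuous_on ({a..b} \<times> UNIV \<times> UNIV) (\<lambda>(t, x, v). K t x v)"
  obtains B where "B \<ge> 0" "\<And>t x v. t \<in> {a..b} \<Longrightarrow> \<bar>x\<bar> \<le> R \<Longrightarrow> \<bar>v\<bar> \<le> R \<Longrightarrow> \<bar>K t x v\<bar> \<le> B"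
proof -
  define C :: "(real \<times> real \<times> real) set" where "C = {a..b} \<times> cball 0 R \<times> cball 0 R"
  have "bounded ((\<lambda>(t, x, v). K t x v) ` C)"
    unfolding C_def
    by (intro compact_imp_bounded compact_continuous_image continuous_on_subset[OF cont]
        compact_Times compact_Icc compact_cball) auto
  then obtain B where B: "\<And>p. p \<in> C \<Longrightarrow> norm ((\<lambda>(t, x, v). K t x v) p) \<le> B"
    unfolding bounded_iff by blast
  show ?thesis
  proof (rule that[of "max B 0"])
    fix t x v assume "t \<in> {a..b}" "\<bar>x\<bar> \<le> R" "\<bar>v\<bar> \<le> R"
    then have "(t, x, v) \<in> C" by (auto simp: C_def)
    from B[OF this] show "\<bar>K t x v\<bar> \<le> max B 0" by auto
  qed auto
qed

lemma closed_segment_real_bound: "s \<in> closed_segment x (x + h) \<Longrightarrow> \<bar>s - x\<bar> \<le> \<bar>h::real\<bar>"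
  by (cases "0 \<le> h") (auto simp: closed_segment_eq_real_ivl)

lemma closed_segment_real_abs_le:
  "s \<in> closed_segment x y \<Longrightarrow> \<bar>x\<bar> \<le> R \<Longrightarrow> \<bar>y\<bar> \<le> R \<Longrightarrow> \<bar>s\<bar> \<le> (R::real)"
  by (cases "x \<le> y") (auto simp: closed_segment_eq_real_ivl)

lemma C1_3_lipschitz:
  assumes L: "C1_3 {a..b} L"
  obtains B where "B \<ge> 0" "\<And>t x v x' v'. t \<in> {a..b} \<Longrightarrow> \<bar>x\<bar> \<le> R \<Longrightarrow> \<bar>v\<bar> \<le> R \<Longrightarrow> \<bar>x'\<bar> \<le> R \<Longrightarrow> \<bar>v'\<bar> \<le> R \<Longrightarrow>
     \<bar>L t x' v' - L t x v\<bar> \<le> B * (\<bar>x' - x\<bar> + \<bar>v' - v\<bar>)"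
proof -
  obtain B2 where B2: "B2 \<ge> 0" "\<And>t x v. t \<in> {a..b} \<Longrightarrow> \<bar>x\<bar> \<le> R \<Longrightarrow> \<bar>v\<bar> \<le> R \<Longrightarrow> \<bar>d2 L t x v\<bar> \<le> B2"
    using bounded_on_slab[OF C1_3_continuous_d2[OF L]] by blast
  obtain B3 where B3: "B3 \<ge> 0" "\<And>t x v. t \<in> {a..b} \<Longrightarrow> \<bar>x\<bar> \<le> R \<Longrightarrow> \<bar>v\<bar> \<le> R \<Longrightarrow> \<bar>d3 L t x v\<bar> \<le> B3"
    using bounded_on_slab[OF C1_3_continuous_d3[OF L]] by blast
  show ?thesis
  proof (rule that[of "max B2 B3"])
    fix t x v x' v' assume t: "t \<in> {a..b}" and R: "\<bar>x\<bar> \<le> R" "\<bar>v\<bar> \<le> R" "\<bar>x'\<bar> \<le> R" "\<bar>v'\<bar> \<le> R"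
    have "\<bar>L t x' (v + (v' - v)) - L t x' v - 0 * (v' - v)\<bar> \<le> B3 * \<bar>v' - v\<bar>"
    proof (rule abs_diff_linear_le[OF C1_3_has_derivative_d3[OF L t]])
      fix s assume "s \<in> closed_segment v (v + (v' - v))"
      then have "\<bar>s\<bar> \<le> R" using R by (intro closed_segment_real_abs_le[of s v v']) auto
      then show "\<bar>d3 L t x' s - 0\<bar> \<le> B3" using B3(2)[OF t R(3)] by simp
    qed
    moreover have "\<bar>L t (x + (x' - x)) v - L t x v - 0 * (x' - x)\<bar> \<le> B2 * \<bar>x' - x\<bar>"
    proof (rule abs_diff_linear_le[OF C1_3_has_derivative_d2[OF L t]])
      fix s assume "s \<in> closed_segment x (x + (x' - x))"
      then have "\<bar>s\<bar> \<le> R" using R by (intro closed_segment_real_abs_le[of s x x']) auto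
      then show "\<bar>d2 L t s v - 0\<bar> \<le> B2" using B2(2)[OF t _ R(2)] by simp
    qed
    moreover have "B3 * \<bar>v' - v\<bar> \<le> max B2 B3 * \<bar>v' - v\<bar>" "B2 * \<bar>x' - x\<bar> \<le> max B2 B3 * \<bar>x' - x\<bar>"
      by (intro mult_right_mono; simp)+
    ultimately show "\<bar>L t x' v' - L t x v\<bar> \<le> max B2 B3 * (\<bar>x' - x\<bar> + \<bar>v' - v\<bar>)"
      by (simp add: distrib_left, linarith)
  qed (use B2 in auto)
qed

lemma C1_3_linearization:
  assumes L: "C1_3 {a..b} L" and e: "e > 0"
  obtains d where "d > 0" "\<And>t x v h k. t \<in> {a..b} \<Longrightarrow> \<bar>x\<bar> \<le> R \<Longrightarrow> \<bar>v\<bar> \<le> R \<Longrightarrow> \<bar>h\<bar> + \<bar>k\<bar> < d \<Longrightarrow>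
     \<bar>L t (x + h) (v + k) - L t x v - d2 L t x v * h - d3 L t x v * k\<bar> \<le> e * (\<bar>h\<bar> + \<bar>k\<bar>)"
proof -
  obtain d2' where d2': "d2' > 0" and close2: "\<And>t x v x' v'. t \<in> {a..b} \<Longrightarrow> \<bar>x\<bar> \<le> R + 1 \<Longrightarrow> \<bar>v\<bar> \<le> R + 1 \<Longrightarrow>
      \<bar>x'\<bar> \<le> R + 1 \<Longrightarrow> \<bar>v'\<bar> \<le> R + 1 \<Longrightarrow> \<bar>x' - x\<bar> + \<bar>v' - v\<bar> < d2' \<Longrightarrow> \<bar>d2 L t x' v' - d2 L t x v\<bar> < e"
    using uniformly_continuous_on_slab[OF C1_3_continuous_d2[OF L] e] by blast
  obtain d3' where d3': "d3' > 0" and close3: "\<And>t x v x' v'. t \<in> {a..b} \<Longrightarrow> \<bar>x\<bar> \<le> R + 1 \<Longrightarrow> \<bar>v\<bar> \<le> R + 1 \<Longrightarrow>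
      \<bar>x'\<bar> \<le> R + 1 \<Longrightarrow> \<bar>v'\<bar> \<le> R + 1 \<Longrightarrow> \<bar>x' - x\<bar> + \<bar>v' - v\<bar> < d3' \<Longrightarrow> \<bar>d3 L t x' v' - d3 L t x v\<bar> < e"
    using uniformly_continuous_on_slab[OF C1_3_continuous_d3[OF L] e] by blast
  show ?thesis
  proof (rule that[of "min 1 (min d2' d3')"])
    fix t x v h k assume t: "t \<in> {a..b}" and R: "\<bar>x\<bar> \<le> R" "\<bar>v\<bar> \<le> R"
      and hk: "\<bar>h\<bar> + \<bar>k\<bar> < min 1 (min d2' d3')"
    \<comment> \<open>increment first in the last variable at x + h, then in the middle variable\<close>
    have "\<bar>L t (x + h) (v + k) - L t (x + h) v - d3 L t x v * k\<bar> \<le> e * \<bar>k\<bar>"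
    proof (rule abs_diff_linear_le[OF C1_3_has_derivative_d3[OF L t]])
      fix s assume "s \<in> closed_segment v (v + k)"
      then have "\<bar>s - v\<bar> \<le> \<bar>k\<bar>" by (rule closed_segment_real_bound)
      moreover have "\<bar>x + h\<bar> \<le> R + 1" "\<bar>s\<bar> \<le> R + 1"
        using abs_triangle_ineq[of x h] abs_triangle_ineq[of v "s - v"] R hk \<open>\<bar>s - v\<bar> \<le> \<bar>k\<bar>\<close> abs_ge_zero[of h] abs_ge_zero[of k]
        by linarith+
      ultimately show "\<bar>d3 L t (x + h) s - d3 L t x v\<bar> \<le> e"
        using close3[OF t, of x v "x + h" s] R hk by simp
    qed
    moreover have "\<bar>L t (x + h) v - L t x v - d2 L t x v * h\<bar> \<le> e * \<bar>h\<bar>"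
    proof (rule abs_diff_linear_le[OF C1_3_has_derivative_d2[OF L t]])
      fix s assume "s \<in> closed_segment x (x + h)"
      then have "\<bar>s - x\<bar> \<le> \<bar>h\<bar>" by (rule closed_segment_real_bound)
      moreover have "\<bar>s\<bar> \<le> R + 1"
        using abs_triangle_ineq[of x "s - x"] R hk \<open>\<bar>s - x\<bar> \<le> \<bar>h\<bar>\<close> abs_ge_zero[of k]
        by linarith
      moreover have "\<bar>s - x\<bar> < d2'" using \<open>\<bar>s - x\<bar> \<le> \<bar>h\<bar>\<close> hk abs_ge_zero[of k] by linarith
      ultimately show "\<bar>d2 L t s v - d2 L t x v\<bar> \<le> e"
        using close2[OF t, of x v s v] R hk by simp
    qed
    ultimately show "\<bar>L t (x + h) (v + k) - L t x v - d2 L t x v * h - d3 L t x v * k\<bar> \<le> e * (\<bar>h\<bar> + \<bar>k\<bar>)"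
      by (simp add: distrib_left)
  qed (use d2' d3' in auto)
qed

lemma C1_3_continuous_on_curve:
  assumes L: "C1_3 {a..b} L" and X: "continuous_on {a..b} X" and V: "continuous_on {a..b} V"
  shows "continuous_on {a..b} (\<lambda>t. L t (X t) (V t))"
  unfolding continuous_on_eq_continuous_within
proof
  fix t0 assume t0: "t0 \<in> {a..b}"
  obtain MX where MX: "\<And>t. t \<in> {a..b} \<Longrightarrow> \<bar>X t\<bar> \<le> MX"
    using continuous_on_Icc_bound[OF X] by blast
  obtain MV where MV: "\<And>t. t \<in> {a..b} \<Longrightarrow> \<bar>V t\<bar> \<le> MV"
    using continuous_on_Icc_bound[OF V] by blast
  obtain B where "B \<ge> 0" and B: "\<And>t x v x' v'. t \<in> {a..b} \<Longrightarrow> \<bar>x\<bar> \<le> max MX MV \<Longrightarrow> \<bar>v\<bar> \<le> max MX MV \<Longrightarrow>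
      \<bar>x'\<bar> \<le> max MX MV \<Longrightarrow> \<bar>v'\<bar> \<le> max MX MV \<Longrightarrow> \<bar>L t x' v' - L t x v\<bar> \<le> B * (\<bar>x' - x\<bar> + \<bar>v' - v\<bar>)"
    using C1_3_lipschitz[OF L, of "max MX MV"] by blast
  have "((\<lambda>t. L t (X t) (V t) - L t (X t0) (V t0)) \<longlongrightarrow> 0) (at t0 within {a..b})"
  proof (rule Lim_null_comparison)
    show "\<forall>\<^sub>F t in at t0 within {a..b}.
        norm (L t (X t) (V t) - L t (X t0) (V t0)) \<le> B * (\<bar>X t - X t0\<bar> + \<bar>V t - V t0\<bar>)"
      unfolding eventually_at_filter
    proof (intro always_eventually allI impI)
      fix t assume "t \<noteq> t0" and t: "t \<in> {a..b}"
      have "\<bar>X t\<bar> \<le> max MX MV" "\<bar>V t\<bar> \<le> max MX MV" "\<bar>X t0\<bar> \<le> max MX MV" "\<bar>V t0\<bar> \<le> max MX MV"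
        using MX[OF t] MV[OF t] MX[OF t0] MV[OF t0] by linarith+
      with B[OF t] show "norm (L t (X t) (V t) - L t (X t0) (V t0)) \<le> B * (\<bar>X t - X t0\<bar> + \<bar>V t - V t0\<bar>)"
        by simp
    qed
    have "((\<lambda>t. B * (\<bar>X t - X t0\<bar> + \<bar>V t - V t0\<bar>)) \<longlongrightarrow> B * (\<bar>X t0 - X t0\<bar> + \<bar>V t0 - V t0\<bar>))
        (at t0 within {a..b})"
      using X V t0 by (intro tendsto_intros) (auto simp: continuous_on_def)
    then show "((\<lambda>t. B * (\<bar>X t - X t0\<bar> + \<bar>V t - V t0\<bar>)) \<longlongrightarrow> 0) (at t0 within {a..b})"
      by simp
  qed
  moreover have "((\<lambda>t. L t (X t0) (V t0)) \<longlongrightarrow> L t0 (X t0) (V t0)) (at t0 within {a..b})"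
    using C1_3_continuous_within_time[OF L t0] by (simp add: continuous_within)
  ultimately have "((\<lambda>t. (L t (X t) (V t) - L t (X t0) (V t0)) + L t (X t0) (V t0)) \<longlongrightarrow> 0 + L t0 (X t0) (V t0))
      (at t0 within {a..b})"
    by (rule tendsto_add)
  then show "continuous (at t0 within {a..b}) (\<lambda>t. L t (X t) (V t))"
    by (simp add: continuous_within)
qed

section \<open>Bump functions and test functions\<close>

lemma has_real_derivative_max0_power2:
  "((\<lambda>u::real. (max 0 u)\<^sup>2) has_real_derivative 2 * max 0 u) (at u)"
proof -
  consider "u = 0" | "0 < u" | "u < 0" by linarith
  then show ?thesis
  proof cases
    case 1
    have "((\<lambda>h::real. (max 0 h)\<^sup>2 / h) \<longlongrightarrow> 0) (at 0)"
    proof (rule Lim_null_comparison)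
      have "\<bar>(max 0 h)\<^sup>2 / h\<bar> \<le> \<bar>h\<bar>" for h :: real
        by (cases "0 < h") (simp_all add: max_def power2_eq_square)
      then show "\<forall>\<^sub>F h in at 0. norm ((max 0 h)\<^sup>2 / h) \<le> \<bar>h::real\<bar>"
        by (intro always_eventually allI) simp
      show "((\<lambda>h::real. \<bar>h\<bar>) \<longlongrightarrow> 0) (at 0)"
        using tendsto_rabs_zero[OF tendsto_ident_at[of "0::real" UNIV]] by simp
    qed
    then show ?thesis using 1 by (simp add: DERIV_def)
  next
    case 2
    have "((\<lambda>u. u\<^sup>2) has_real_derivative 2 * max 0 u) (at u)"
      using 2 by (auto intro!: derivative_eq_intros simp: max_def)
    then show ?thesis
      by (rule has_field_derivative_transform_within_open[where S = "{0<..}"]) (use 2 in \<open>auto simp: max_def\<close>)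
  next
    case 3
    have "((\<lambda>u. 0) has_real_derivative 2 * max 0 u) (at u)"
      using 3 by (simp add: max_def)
    then show ?thesis
      by (rule has_field_derivative_transform_within_open[where S = "{..<0}"]) (use 3 in \<open>auto simp: max_def\<close>)
  qed
qed

definition bump :: "real \<Rightarrow> real \<Rightarrow> real \<Rightarrow> real" where
  "bump c r t = (max 0 (r\<^sup>2 - (t - c)\<^sup>2))\<^sup>2"

lemma bump_has_real_derivative:
  "(bump c r has_real_derivative 2 * max 0 (r\<^sup>2 - (t - c)\<^sup>2) * (- 2 * (t - c))) (at t)"
proof -
  have "((\<lambda>t. r\<^sup>2 - (t - c)\<^sup>2) has_real_derivative - 2 * (t - c)) (at t)"
    by (auto intro!: derivative_eq_intros)
  from DERIV_chain2[OF has_real_derivative_max0_power2 this] show ?thesis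
    unfolding bump_def by simp
qed

lemma deriv_bump: "deriv (bump c r) t = 2 * max 0 (r\<^sup>2 - (t - c)\<^sup>2) * (- 2 * (t - c))"
  by (rule DERIV_imp_deriv[OF bump_has_real_derivative])

lemma bump_vanishes:
  assumes "0 < r" "r \<le> \<bar>t - c\<bar>"
  shows "bump c r t = 0" "deriv (bump c r) t = 0"
proof -
  have "r\<^sup>2 \<le> (t - c)\<^sup>2" using assms by (metis abs_le_square_iff abs_of_pos)
  then show "bump c r t = 0" "deriv (bump c r) t = 0" by (simp_all add: bump_def deriv_bump)
qed

lemma bump_pos:
  assumes "\<bar>t - c\<bar> < r"
  shows "0 < bump c r t"
proof -
  have "\<bar>t - c\<bar>\<^sup>2 < r\<^sup>2" by (rule power_strict_mono) (use assms in auto)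
  then show ?thesis by (simp add: bump_def max_def)
qed

definition test_function :: "real \<Rightarrow> real \<Rightarrow> (real \<Rightarrow> real) \<Rightarrow> bool" where
  "test_function a b \<eta> \<longleftrightarrow> (\<forall>t. (\<eta> has_real_derivative deriv \<eta> t) (at t)) \<and> continuous_on UNIV (deriv \<eta>) \<and>
     (\<exists>p q. a < p \<and> p \<le> q \<and> q < b \<and> (\<forall>t. t \<notin> {p<..<q} \<longrightarrow> \<eta> t = 0 \<and> deriv \<eta> t = 0))"

lemma test_function_bump:
  assumes "0 < r" "a < c - r" "c + r < b"
  shows "test_function a b (bump c r)"
  unfolding test_function_def
proof (intro conjI allI)
  show "(bump c r has_real_derivative deriv (bump c r) t) (at t)" for t
    unfolding deriv_bump by (rule bump_has_real_derivative)
  show "continuous_on UNIV (deriv (bump c r))"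
    unfolding deriv_bump[abs_def] by (intro continuous_intros)
  have "bump c r t = 0 \<and> deriv (bump c r) t = 0" if "t \<notin> {c - r<..<c + r}" for t
    using that bump_vanishes[OF assms(1), of t c] by auto
  moreover have "c - r \<le> c + r" using assms(1) by simp
  ultimately show "\<exists>p q. a < p \<and> p \<le> q \<and> q < b \<and> (\<forall>t. t \<notin> {p<..<q} \<longrightarrow> bump c r t = 0 \<and> deriv (bump c r) t = 0)"
    using assms(2,3) by blast
qed

lemma test_function_has_real_derivative:
  assumes "test_function a b \<eta>"
  shows "(\<eta> has_real_derivative deriv \<eta> t) (at t)"
  using conjunct1[OF assms[unfolded test_function_def]] by (rule spec)

lemma test_function_continuous_deriv:
  assumes "test_function a b \<eta>"
  shows "continuous_on S (deriv \<eta>)"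
  using conjunct1[OF conjunct2[OF assms[unfolded test_function_def]]] by (rule continuous_on_subset) simp

lemma test_function_continuous:
  assumes "test_function a b \<eta>"
  shows "continuous_on S \<eta>"
  by (intro continuous_at_imp_continuous_on ballI DERIV_isCont[OF test_function_has_real_derivative[OF assms]])

lemma test_function_support:
  assumes "test_function a b \<eta>"
  obtains p q where "a < p" "p \<le> q" "q < b" "\<And>t. t \<notin> {p<..<q} \<Longrightarrow> \<eta> t = 0"
    "\<And>t. t \<notin> {p<..<q} \<Longrightarrow> deriv \<eta> t = 0"
proof -
  from conjunct2[OF conjunct2[OF assms[unfolded test_function_def]]]
  obtain p q where "a < p" "p \<le> q" "q < b" "\<forall>t. t \<notin> {p<..<q} \<longrightarrow> \<eta> t = 0 \<and> deriv \<eta> t = 0"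
    by blast
  then show ?thesis using that by blast
qed

lemma test_function_vanishes:
  assumes "test_function a b \<eta>" "t \<notin> {a<..<b}"
  shows "\<eta> t = 0" "deriv \<eta> t = 0"
proof -
  obtain p q where "a < p" "p \<le> q" "q < b" "\<And>t. t \<notin> {p<..<q} \<Longrightarrow> \<eta> t = 0"
    "\<And>t. t \<notin> {p<..<q} \<Longrightarrow> deriv \<eta> t = 0"
    using test_function_support[OF assms(1)] by blast
  moreover have "t \<notin> {p<..<q}" using assms(2) \<open>a < p\<close> \<open>q < b\<close> by auto
  ultimately show "\<eta> t = 0" "deriv \<eta> t = 0" by blast+
qed

lemma integrable_test_function_mult:
  assumes \<eta>: "test_function a b \<eta>" and F: "continuous_on {a<..<b} F"
  shows "(\<lambda>t. \<eta> t * F t) integrable_on {a..b}"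
proof -
  obtain p q where pq: "a < p" "p \<le> q" "q < b" and vanish: "\<And>t. t \<notin> {p<..<q} \<Longrightarrow> \<eta> t = 0"
    and "\<And>t. t \<notin> {p<..<q} \<Longrightarrow> deriv \<eta> t = 0"
    using test_function_support[OF \<eta>] by blast
  have "continuous_on {p..q} (\<lambda>t. \<eta> t * F t)"
  proof (rule continuous_on_mult)
    show "continuous_on {p..q} F" by (rule continuous_on_subset[OF F]) (use pq in auto)
  qed (rule test_function_continuous[OF \<eta>])
  then have "(\<lambda>t. \<eta> t * F t) integrable_on {p..q}" by (rule integrable_continuous_interval)
  then have "((\<lambda>t. \<eta> t * F t) has_integral integral {p..q} (\<lambda>t. \<eta> t * F t)) {a..b}"
  proof (rule has_integral_on_superset[OF integrable_integral])
    show "\<eta> t * F t = 0" if "t \<notin> {p..q}" for t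
    proof -
      have "t \<notin> {p<..<q}" using that by auto
      then show ?thesis using vanish by simp
    qed
    show "{p..q} \<subseteq> {a..b}" using pq by auto
  qed
  then show ?thesis by blast
qed

lemma exists_bump_integral_nonzero:
  fixes E :: "real \<Rightarrow> real"
  assumes E: "continuous_on {a<..<b} E" and t1: "t1 \<in> {a<..<b}" and "E t1 \<noteq> 0"
  obtains c r where "0 < r" "a < c - r" "c + r < b" "integral {a..b} (\<lambda>t. bump c r t * E t) \<noteq> 0"
proof -
  have "0 < \<bar>E t1\<bar>" using \<open>E t1 \<noteq> 0\<close> by simp
  then obtain d where "d > 0" and close: "\<And>t. t \<in> {a<..<b} \<Longrightarrow> dist t t1 < d \<Longrightarrow> dist (E t) (E t1) < \<bar>E t1\<bar>"
    using continuous_on_iff[THEN iffD1, OF E, rule_format, OF t1] by blast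
  define m where "m = min d (min (t1 - a) (b - t1))"
  have "0 < m" "m \<le> d" "m \<le> t1 - a" "m \<le> b - t1" using \<open>d > 0\<close> t1 by (auto simp: m_def)
  define r where "r = m / 2"
  have r: "0 < r" "a < t1 - r" "t1 + r < b" "r < d"
    using \<open>0 < m\<close> \<open>m \<le> d\<close> \<open>m \<le> t1 - a\<close> \<open>m \<le> b - t1\<close> unfolding r_def by linarith+
  define g where "g t = bump t1 r t * (E t * E t1)" for t
  have g_nonneg: "0 \<le> g t" if "t \<in> {t1 - r..t1 + r}" for t
  proof -
    have "\<bar>E t - E t1\<bar> < \<bar>E t1\<bar>" using close[of t] that r by (auto simp: dist_real_def)
    \<comment> \<open>so E keeps the sign of E t1 near t1\<close>
    then have "0 < E t * E t1"
    proof (cases "0 < E t1")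
      case True
      have "0 < E t" using \<open>\<bar>E t - E t1\<bar> < \<bar>E t1\<bar>\<close> True by (simp add: abs_less_iff)
      show ?thesis using \<open>0 < E t\<close> True by (rule mult_pos_pos)
    next
      case False
      then have "E t1 < 0" using \<open>E t1 \<noteq> 0\<close> by simp
      have "E t < 0" using \<open>\<bar>E t - E t1\<bar> < \<bar>E t1\<bar>\<close> \<open>E t1 < 0\<close> by (simp add: abs_less_iff)
      show ?thesis using \<open>E t < 0\<close> \<open>E t1 < 0\<close> by (rule mult_neg_neg)
    qed
    then show ?thesis unfolding g_def bump_def by simp
  qed
  have "0 < E t1 * E t1" using \<open>E t1 \<noteq> 0\<close> by (auto simp: zero_less_mult_iff linorder_neq_iff)
  then have "0 < g t1" unfolding g_def using bump_pos[of t1 t1 r] r(1) by (simp add: mult_pos_pos)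
  have g_cont: "continuous_on {t1 - r..t1 + r} g"
    unfolding g_def using r
    by (intro continuous_intros test_function_continuous[OF test_function_bump[OF r(1), of a t1 b]]
        continuous_on_subset[OF E]) auto
  have "\<not> (g has_integral 0) {t1 - r..t1 + r}"
  proof
    assume "(g has_integral 0) {t1 - r..t1 + r}"
    then have "g t1 = 0"
      using has_integral_0_cbox_imp_0[of "t1 - r" "t1 + r" g t1] g_cont g_nonneg r(1)
      by (simp add: box_real)
    with \<open>0 < g t1\<close> show False by simp
  qed
  moreover have g_int: "(g has_integral integral {t1 - r..t1 + r} g) {t1 - r..t1 + r}"
    by (rule integrable_integral[OF integrable_continuous_interval[OF g_cont]])
  ultimately have "integral {t1 - r..t1 + r} g \<noteq> 0" by auto
  have "((\<lambda>t. bump t1 r t * E t) has_integral integral {t1 - r..t1 + r} g / E t1) {a..b}"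
  proof (rule has_integral_on_superset)
    show "((\<lambda>t. bump t1 r t * E t) has_integral integral {t1 - r..t1 + r} g / E t1) {t1 - r..t1 + r}"
      using has_integral_divide[OF g_int, of "E t1"] \<open>E t1 \<noteq> 0\<close> by (simp add: g_def)
    show "bump t1 r t * E t = 0" if "t \<notin> {t1 - r..t1 + r}" for t
      using that bump_vanishes(1)[OF r(1), of t t1] by auto
    show "{t1 - r..t1 + r} \<subseteq> {a..b}" using r by auto
  qed
  then have "integral {a..b} (\<lambda>t. bump t1 r t * E t) = integral {t1 - r..t1 + r} g / E t1"
    by (rule integral_unique)
  with \<open>integral {t1 - r..t1 + r} g \<noteq> 0\<close> \<open>E t1 \<noteq> 0\<close> show ?thesis using that[OF r(1-3)] by simp
qed

section \<open>Fractional integration by parts\<close>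

lemma has_integral_reflect_shift:
  fixes f :: "real \<Rightarrow> real"
  assumes "(f has_integral I) {a..t}"
  shows "((\<lambda>u. f (t - u)) has_integral I) {0..t - a}"
proof -
  have "((\<lambda>x. f (-x)) has_integral I) {-t..-a}"
    using assms has_integral_reflect_real[of f] by blast
  then have "((\<lambda>x. (\<lambda>x. f (-x)) (1 *\<^sub>R x + (-t))) has_integral I /\<^sub>R 1 ^ DIM(real))
        (cbox ((-t - (-t)) /\<^sub>R 1) ((-a - (-t)) /\<^sub>R 1))"
    by (subst has_integral_affinity_iff) auto
  then show ?thesis by simp
qed

lemma integral_powr_convolution_eq_shifted:
  fixes h :: "real \<Rightarrow> real"
  assumes t: "a \<le> t" "t \<le> b" and p: "p > -1" and h: "continuous_on UNIV h"
    and h0: "\<And>\<tau>. \<tau> \<le> a \<Longrightarrow> h \<tau> = 0"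
  shows "integral {a..t} (\<lambda>\<tau>. (t - \<tau>) powr p * h \<tau>) = integral {0..b - a} (\<lambda>u. u powr p * h (t - u))"
proof -
  define I where "I = integral {a..t} (\<lambda>\<tau>. (t - \<tau>) powr p * h \<tau>)"
  have "((\<lambda>\<tau>. (t - \<tau>) powr p * h \<tau>) has_integral I) {a..t}"
    unfolding I_def using t p
    by (intro integrable_integral integrable_powr_diff_mult continuous_on_subset[OF h]) auto
  from has_integral_reflect_shift[OF this]
  have "((\<lambda>u. u powr p * h (t - u)) has_integral I) (cbox 0 (t - a))" by simp
  from has_integral_restrict_closed_subinterval[OF this, of 0 "b - a"] t
  have restricted: "((\<lambda>u. if u \<in> cbox 0 (t - a) then u powr p * h (t - u) else 0) has_integral I) (cbox 0 (b - a))"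
    by simp
  have eq: "(if u \<in> cbox 0 (t - a) then u powr p * h (t - u) else 0) = u powr p * h (t - u)"
    if "u \<in> cbox 0 (b - a)" for u
    using that h0[of "t - u"] by auto
  have "((\<lambda>u. u powr p * h (t - u)) has_integral I) (cbox 0 (b - a))"
    by (rule iffD1[OF has_integral_cong[OF eq] restricted])
  then show ?thesis unfolding I_def by (simp add: integral_unique)
qed

lemma continuous_on_powr_shifted_integral:
  fixes h :: "real \<Rightarrow> real"
  assumes L: "0 \<le> L" and p: "p > -1" and h: "continuous_on UNIV h"
  shows "continuous_on {a..b} (\<lambda>t. integral {0..L} (\<lambda>u. u powr p * h (t - u)))"
  unfolding continuous_on_iff
proof (intro ballI allI impI)
  fix t e :: real assume t: "t \<in> {a..b}" and e: "0 < e"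
  define C where "C = L powr (p + 1) / (p + 1)"
  have C: "0 \<le> C" using p by (simp add: C_def)
  have k: "(\<lambda>u. u powr p) integrable_on {0..L}" "integral {0..L} (\<lambda>u. u powr p) = C"
    using has_integral_powr_from_0[OF p L] by (auto simp: C_def integral_unique)
  have h_shift: "continuous_on {0..L} (\<lambda>u. h (s - u))" for s
    by (intro continuous_on_compose2[OF h] continuous_intros) auto
  have int: "(\<lambda>u. u powr p * h (s - u)) integrable_on {0..L}" for s
    using absolutely_integrable_mult_continuous[OF nonnegative_absolutely_integrable_1[OF k(1)] h_shift]
    by (auto simp: absolutely_integrable_on_def)
  have "uniformly_continuous_on {a - L..b} h"
    by (intro compact_uniformly_continuous continuous_on_subset[OF h]) auto
  moreover have "0 < e / (C + 1)" using e C by simp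
  ultimately obtain d where d: "0 < d" and close: "\<forall>x\<in>{a - L..b}. \<forall>x'\<in>{a - L..b}. dist x' x < d \<longrightarrow>
      dist (h x') (h x) < e / (C + 1)"
    unfolding uniformly_continuous_on_def by blast
  show "\<exists>d>0. \<forall>t'\<in>{a..b}. dist t' t < d \<longrightarrow>
      dist (integral {0..L} (\<lambda>u. u powr p * h (t' - u))) (integral {0..L} (\<lambda>u. u powr p * h (t - u))) < e"
  proof (intro exI[of _ d] conjI ballI impI d)
    fix t' assume t': "t' \<in> {a..b}" and "dist t' t < d"
    have bound: "\<bar>h (t' - u) - h (t - u)\<bar> \<le> e / (C + 1)" if "u \<in> {0..L}" for u
    proof -
      have "t' - u \<in> {a - L..b}" "t - u \<in> {a - L..b}" "dist (t' - u) (t - u) < d"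
        using that t t' \<open>dist t' t < d\<close> by (auto simp: dist_real_def)
      then have "dist (h (t' - u)) (h (t - u)) < e / (C + 1)" using close by blast
      then show ?thesis unfolding dist_real_def by linarith
    qed
    have "integral {0..L} (\<lambda>u. u powr p * h (t' - u)) - integral {0..L} (\<lambda>u. u powr p * h (t - u))
        = integral {0..L} (\<lambda>u. u powr p * (h (t' - u) - h (t - u)))"
      by (simp add: integral_diff[OF int int, symmetric] right_diff_distrib)
    also have "\<bar>\<dots>\<bar> \<le> e / (C + 1) * C"
      using abs_integral_mult_continuous_le[OF k(1) _ continuous_on_diff[OF h_shift h_shift] bound] k(2)
      by simp
    also have "\<dots> < e" using e C by (simp add: field_simps)
    finally show "dist (integral {0..L} (\<lambda>u. u powr p * h (t' - u))) (integral {0..L} (\<lambda>u. u powr p * h (t - u))) < e"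
      by (simp add: dist_real_def)
  qed
qed

lemma continuous_on_powr_convolution:
  fixes h :: "real \<Rightarrow> real"
  assumes "a \<le> b" "p > -1" "continuous_on UNIV h" "\<And>\<tau>. \<tau> \<le> a \<Longrightarrow> h \<tau> = 0"
  shows "continuous_on {a..b} (\<lambda>t. integral {a..t} (\<lambda>\<tau>. (t - \<tau>) powr p * h \<tau>))"
  using continuous_on_powr_shifted_integral[of "b - a" p h a b] integral_powr_convolution_eq_shifted[of a _ b p h]
    assms by (auto intro: continuous_on_cong[THEN iffD1, OF refl, rotated])

lemma lCD_eq_integral:
  "lCD \<beta> a f t = integral {a..t} (\<lambda>\<tau>. (t - \<tau>) powr (- \<beta>) * deriv f \<tau>) / Gamma (1 - \<beta>)"
  unfolding lCD_def lRLI_def by simp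

lemma continuous_on_lCD_test_function:
  assumes "a \<le> b" "\<beta> < 1" "test_function a c \<eta>"
  shows "continuous_on {a..b} (lCD \<beta> a \<eta>)"
proof -
  have "continuous_on {a..b} (\<lambda>t. integral {a..t} (\<lambda>\<tau>. (t - \<tau>) powr (- \<beta>) * deriv \<eta> \<tau>))"
    using assms test_function_vanishes(2)[OF assms(3)]
    by (intro continuous_on_powr_convolution test_function_continuous_deriv) auto
  moreover have "0 < Gamma (1 - \<beta>)" using assms(2) by (intro Gamma_real_pos) simp
  ultimately show ?thesis unfolding lCD_eq_integral[abs_def] by (intro continuous_intros) auto
qed

lemma deriv_C1_interval:
  assumes "\<forall>t\<in>{a..b}. (y has_real_derivative y' t) (at t within {a..b})" "\<tau> \<in> {a<..<b}"
  shows "(y has_real_derivative y' \<tau>) (at \<tau>)"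
proof -
  have "at \<tau> within {a..b} = at \<tau>" by (rule at_within_interior) (use assms(2) in simp)
  moreover have "(y has_real_derivative y' \<tau>) (at \<tau> within {a..b})" using assms by auto
  ultimately show ?thesis by simp
qed

lemma lCD_linear_combination:
  assumes y: "C1_interval a b y" and "\<beta> < 1" and \<eta>1: "test_function a b \<eta>1" and \<eta>2: "test_function a b \<eta>2"
    and t: "t \<in> {a..b}"
  shows "lCD \<beta> a (\<lambda>s. y s + e1 * \<eta>1 s + e2 * \<eta>2 s) t = lCD \<beta> a y t + e1 * lCD \<beta> a \<eta>1 t + e2 * lCD \<beta> a \<eta>2 t"
proof -
  obtain y' where dy: "\<forall>t\<in>{a..b}. (y has_real_derivative y' t) (at t within {a..b})"
    and cy: "continuous_on {a..b} y'"
    using y unfolding C1_interval_def by blast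
  define k where "k \<tau> = (t - \<tau>) powr (- \<beta>)" for \<tau>
  have int: "(\<lambda>\<tau>. k \<tau> * f \<tau>) integrable_on {a..t}" if "continuous_on {a..t} f" for f
    unfolding k_def using that t \<open>\<beta> < 1\<close> by (intro integrable_powr_diff_mult) auto
  have cont: "continuous_on {a..t} y'" "continuous_on {a..t} (deriv \<eta>1)" "continuous_on {a..t} (deriv \<eta>2)"
    using t by (auto intro: continuous_on_subset[OF cy] test_function_continuous_deriv[OF \<eta>1]
        test_function_continuous_deriv[OF \<eta>2])
  \<comment> \<open>the one-sided derivative of y coincides with deriv y except at the two endpoints\<close>
  have interior: "\<tau> \<in> {a<..<b}" if "\<tau> \<in> {a..t} - {a, t}" for \<tau> using that t by auto
  have "integral {a..t} (\<lambda>\<tau>. k \<tau> * deriv (\<lambda>s. y s + e1 * \<eta>1 s + e2 * \<eta>2 s) \<tau>)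
      = integral {a..t} (\<lambda>\<tau>. k \<tau> * y' \<tau> + e1 * (k \<tau> * deriv \<eta>1 \<tau>) + e2 * (k \<tau> * deriv \<eta>2 \<tau>))"
  proof (rule integral_spike[of "{a, t}"])
    fix \<tau> assume "\<tau> \<in> {a..t} - {a, t}"
    have "deriv (\<lambda>s. y s + e1 * \<eta>1 s + e2 * \<eta>2 s) \<tau> = y' \<tau> + e1 * deriv \<eta>1 \<tau> + e2 * deriv \<eta>2 \<tau>"
      by (intro DERIV_imp_deriv DERIV_add DERIV_cmult deriv_C1_interval[OF dy interior]
          test_function_has_real_derivative[OF \<eta>1] test_function_has_real_derivative[OF \<eta>2] \<open>\<tau> \<in> _\<close>)
    then show "k \<tau> * y' \<tau> + e1 * (k \<tau> * deriv \<eta>1 \<tau>) + e2 * (k \<tau> * deriv \<eta>2 \<tau>)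
        = k \<tau> * deriv (\<lambda>s. y s + e1 * \<eta>1 s + e2 * \<eta>2 s) \<tau>"
      by (simp add: algebra_simps)
  qed simp
  also have "\<dots> = integral {a..t} (\<lambda>\<tau>. k \<tau> * y' \<tau>) + e1 * integral {a..t} (\<lambda>\<tau>. k \<tau> * deriv \<eta>1 \<tau>)
      + e2 * integral {a..t} (\<lambda>\<tau>. k \<tau> * deriv \<eta>2 \<tau>)"
    using int[OF cont(1)] int[OF cont(2)] int[OF cont(3)]
    by (simp add: integral_add integrable_add integral_mult_right integrable_on_mult_right)
  also have "integral {a..t} (\<lambda>\<tau>. k \<tau> * y' \<tau>) = integral {a..t} (\<lambda>\<tau>. k \<tau> * deriv y \<tau>)"
  proof (rule integral_spike[of "{a, t}"])
    fix \<tau> assume "\<tau> \<in> {a..t} - {a, t}"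
    then show "k \<tau> * deriv y \<tau> = k \<tau> * y' \<tau>"
      using DERIV_imp_deriv[OF deriv_C1_interval[OF dy interior]] by simp
  qed simp
  finally show ?thesis unfolding lCD_eq_integral k_def by (simp add: add_divide_distrib)
qed

lemma borel_measurable_ident_lebesgue_on: "(\<lambda>x. x) \<in> borel_measurable (lebesgue_on S)"
  using id_borel_measurable_lebesgue_on by (simp add: id_def)

lemma set_integrable_lborel_if_absolutely_integrable:
  fixes f :: "real \<Rightarrow> real"
  assumes "f \<in> borel_measurable borel" "f absolutely_integrable_on S" "S \<in> sets borel"
  shows "set_integrable lborel S f"
proof -
  have m: "(\<lambda>x. indicator S x *\<^sub>R f x) \<in> borel_measurable lborel"
    unfolding measurable_lborel2 using assms(1,3) by (intro borel_measurable_scaleR borel_measurable_indicator)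
  have "integrable lebesgue (\<lambda>x. indicator S x *\<^sub>R f x)"
    using assms(2) unfolding set_integrable_def by simp
  then show ?thesis unfolding set_integrable_def using integrable_completion[OF m] by simp
qed

lemma powr_mult_powr_le_sum:
  fixes \<tau> b t \<alpha> \<beta> :: real
  assumes "\<tau> < b" "\<tau> \<le> t" "t \<le> b" "\<alpha> > 0" "\<alpha> < 1" "\<beta> > 0"
  shows "(t - \<tau>) powr (-\<beta>) * (b - t) powr (\<alpha> - 1)
     \<le> ((b - \<tau>) / 2) powr (\<alpha> - 1) * (t - \<tau>) powr (-\<beta>) + ((b - \<tau>) / 2) powr (-\<beta>) * (b - t) powr (\<alpha> - 1)"
proof (cases "t \<le> (\<tau> + b) / 2")
  case True
  have "(b - t) powr (\<alpha> - 1) \<le> ((b - \<tau>) / 2) powr (\<alpha> - 1)"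
    by (rule powr_mono2') (use assms True in auto)
  then have "(t - \<tau>) powr (-\<beta>) * (b - t) powr (\<alpha> - 1) \<le> (t - \<tau>) powr (-\<beta>) * ((b - \<tau>) / 2) powr (\<alpha> - 1)"
    by (intro mult_left_mono) auto
  moreover have "0 \<le> ((b - \<tau>) / 2) powr (-\<beta>) * (b - t) powr (\<alpha> - 1)" by simp
  ultimately show ?thesis by (smt (verit) mult.commute)
next
  case False
  have "(t - \<tau>) powr (-\<beta>) \<le> ((b - \<tau>) / 2) powr (-\<beta>)"
    by (rule powr_mono2') (use assms False in auto)
  then have "(t - \<tau>) powr (-\<beta>) * (b - t) powr (\<alpha> - 1) \<le> ((b - \<tau>) / 2) powr (-\<beta>) * (b - t) powr (\<alpha> - 1)"
    by (intro mult_right_mono) auto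
  moreover have "0 \<le> ((b - \<tau>) / 2) powr (\<alpha> - 1) * (t - \<tau>) powr (-\<beta>)" by simp
  ultimately show ?thesis by linarith
qed

lemma absolutely_integrable_two_singular_kernels:
  fixes \<tau> b \<alpha> \<beta> :: real and \<phi> :: "real \<Rightarrow> real"
  assumes tb: "\<tau> < b" and al: "\<alpha> > 0" "\<alpha> < 1" and be: "\<beta> > 0" "\<beta> < 1"
    and \<phi>: "continuous_on {\<tau>..b} \<phi>"
  shows "(\<lambda>t. (t - \<tau>) powr (-\<beta>) * ((b - t) powr (\<alpha> - 1) * \<phi> t)) absolutely_integrable_on {\<tau>..b}"
proof -
  obtain M where M: "\<And>t. t \<in> {\<tau>..b} \<Longrightarrow> \<bar>\<phi> t\<bar> \<le> M"
    using continuous_on_Icc_bound[OF \<phi>] by blast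
  define c1 where "c1 = ((b - \<tau>) / 2) powr (\<alpha> - 1)"
  define c2 where "c2 = ((b - \<tau>) / 2) powr (-\<beta>)"
  note borel_measurable_ident_lebesgue_on[measurable]
  have [measurable]: "\<phi> \<in> borel_measurable (lebesgue_on {\<tau>..b})"
    by (rule continuous_imp_measurable_on_sets_lebesgue[OF \<phi>]) auto
  show ?thesis
  proof (rule measurable_bounded_by_integrable_imp_absolutely_integrable)
    show "(\<lambda>t. (t - \<tau>) powr (-\<beta>) * ((b - t) powr (\<alpha> - 1) * \<phi> t)) \<in> borel_measurable (lebesgue_on {\<tau>..b})"
      by measurable
    show "{\<tau>..b} \<in> sets lebesgue" by simp
    have i1: "(\<lambda>t. (t - \<tau>) powr (-\<beta>)) integrable_on {\<tau>..b}"
      using has_integral_powr_diff_right[of \<tau> b "-\<beta>"] tb be by auto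
    have i2: "(\<lambda>t. (b - t) powr (\<alpha> - 1)) integrable_on {\<tau>..b}"
      using has_integral_powr_diff_left[of \<tau> b "\<alpha> - 1"] tb al by auto
    show "(\<lambda>t. M * (c1 * (t - \<tau>) powr (-\<beta>) + c2 * (b - t) powr (\<alpha> - 1))) integrable_on {\<tau>..b}"
      by (intro integrable_on_mult_right integrable_add i1 i2)
    fix t assume t: "t \<in> {\<tau>..b}"
    have "norm ((t - \<tau>) powr (-\<beta>) * ((b - t) powr (\<alpha> - 1) * \<phi> t)) = ((t - \<tau>) powr (-\<beta>) * (b - t) powr (\<alpha> - 1)) * \<bar>\<phi> t\<bar>"
      by (simp add: abs_mult)
    also have "\<dots> \<le> (c1 * (t - \<tau>) powr (-\<beta>) + c2 * (b - t) powr (\<alpha> - 1)) * M"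
      using powr_mult_powr_le_sum[of \<tau> b t \<alpha> \<beta>] tb t al be M[OF t] unfolding c1_def c2_def
      by (intro mult_mono) auto
    finally show "norm ((t - \<tau>) powr (-\<beta>) * ((b - t) powr (\<alpha> - 1) * \<phi> t)) \<le> M * (c1 * (t - \<tau>) powr (-\<beta>) + c2 * (b - t) powr (\<alpha> - 1))"
      by (simp add: mult.commute)
  qed
qed

lemma lborel_integral_eq_integral_restrict:
  fixes A :: "real \<Rightarrow> real" and F :: "real \<Rightarrow> real"
  assumes "integrable lborel A" "\<And>t. A t = (if t \<in> S then F t else 0)"
  shows "integral\<^sup>L lborel A = integral S F"
proof -
  have "(A has_integral integral\<^sup>L lborel A) UNIV" by (rule has_integral_integral_real[OF assms(1)])
  moreover have "A = (\<lambda>t. if t \<in> S then F t else 0)" by (rule ext) (rule assms(2))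
  ultimately have "((\<lambda>t. if t \<in> S then F t else 0) has_integral integral\<^sup>L lborel A) UNIV"
    by simp
  then have "(F has_integral integral\<^sup>L lborel A) S" by (simp only: has_integral_restrict_UNIV)
  then show ?thesis by (simp add: integral_unique)
qed

lemma lborel_indicator_integral_eq_integral:
  fixes f :: "real \<Rightarrow> real"
  assumes "f \<in> borel_measurable borel" "f absolutely_integrable_on {c..d}"
  shows "integrable lborel (\<lambda>x. indicator {c..d} x * f x)"
    "integral\<^sup>L lborel (\<lambda>x. indicator {c..d} x * f x) = integral {c..d} f"
proof -
  have si: "set_integrable lborel {c..d} f" by (rule set_integrable_lborel_if_absolutely_integrable[OF assms]) simp
  then show "integrable lborel (\<lambda>x. indicator {c..d} x * f x)" unfolding set_integrable_def by simp
  from set_borel_integral_eq_integral(2)[OF si]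
  show "integral\<^sup>L lborel (\<lambda>x. indicator {c..d} x * f x) = integral {c..d} f"
    unfolding set_lebesgue_integral_def by simp
qed

lemma fractional_fubini:
  fixes a b \<alpha> \<beta> :: real and \<phi> h :: "real \<Rightarrow> real"
  assumes ab: "a < b" and al: "0 < \<alpha>" "\<alpha> < 1" and be: "0 < \<beta>" "\<beta> < 1"
    and \<phi>: "continuous_on {a..b} \<phi>" and h: "continuous_on UNIV h"
  shows "integral {a..b} (\<lambda>t. ((b - t) powr (\<alpha> - 1) * \<phi> t) * integral {a..t} (\<lambda>\<tau>. (t - \<tau>) powr (-\<beta>) * h \<tau>))
       = integral {a..b} (\<lambda>\<tau>. h \<tau> * integral {\<tau>..b} (\<lambda>t. (t - \<tau>) powr (-\<beta>) * ((b - t) powr (\<alpha> - 1) * \<phi> t)))"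
proof -
  define \<phi>' where "\<phi>' t = indicator {a..b} t * \<phi> t" for t
  have m\<phi>'[measurable]: "\<phi>' \<in> borel_measurable borel"
    using borel_measurable_continuous_on_indicator[OF _ \<phi>] unfolding \<phi>'_def by simp
  have mh[measurable]: "h \<in> borel_measurable borel" by (rule borel_measurable_continuous_onI[OF h])
  have \<phi>'_eq: "\<phi>' t = \<phi> t" if "t \<in> {a..b}" for t using that by (simp add: \<phi>'_def)
  obtain M\<phi> where M\<phi>0: "M\<phi> \<ge> 0" and M\<phi>: "\<And>t. t \<in> {a..b} \<Longrightarrow> \<bar>\<phi> t\<bar> \<le> M\<phi>"
    using continuous_on_Icc_bound[OF \<phi>] by blast
  obtain Mh where Mh0: "Mh \<ge> 0" and Mh: "\<And>t. t \<in> {a..b} \<Longrightarrow> \<bar>h t\<bar> \<le> Mh"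
    using continuous_on_Icc_bound[OF continuous_on_subset[OF h subset_UNIV]] by blast
  define P where "P t \<tau> = (if a \<le> \<tau> \<and> \<tau> \<le> t \<and> t \<le> b then (t - \<tau>) powr (-\<beta>) * ((b - t) powr (\<alpha> - 1) * (\<phi>' t * h \<tau>)) else 0)" for t \<tau>
  have mP[measurable]: "(\<lambda>(t, \<tau>). P t \<tau>) \<in> borel_measurable (lborel \<Otimes>\<^sub>M lborel)"
    unfolding P_def by measurable
  define K where "K = M\<phi> * Mh * ((b - a) powr (1 - \<beta>) / (1 - \<beta>))"

  have per_t: "integrable lborel (\<lambda>\<tau>. P t \<tau>) \<and>
      (LINT \<tau>|lborel. P t \<tau>) = (if t \<in> {a..b} then ((b - t) powr (\<alpha> - 1) * \<phi> t) * integral {a..t} (\<lambda>\<tau>. (t - \<tau>) powr (-\<beta>) * h \<tau>) else 0) \<and>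
      (LINT \<tau>|lborel. norm (P t \<tau>)) \<le> K * (indicator {a..b} t * (b - t) powr (\<alpha> - 1))" for t
  proof (cases "t \<in> {a..b}")
    case False
    then have "P t \<tau> = 0" for \<tau> by (auto simp: P_def)
    then show ?thesis using False by auto
  next
    case True
    define c where "c = (b - t) powr (\<alpha> - 1) * \<phi> t"
    define f where "f \<tau> = (t - \<tau>) powr (-\<beta>) * (c * h \<tau>)" for \<tau>
    have Pf: "P t \<tau> = indicator {a..t} \<tau> * f \<tau>" for \<tau>
      using True by (auto simp: P_def f_def c_def \<phi>'_eq mult_ac)
    have mf: "f \<in> borel_measurable borel" unfolding f_def by measurable
    have af: "f absolutely_integrable_on {a..t}"
      unfolding f_def by (rule absolutely_integrable_powr_diff_mult) (use True be in \<open>auto intro!: continuous_intros continuous_on_subset[OF h]\<close>)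
    note S = lborel_indicator_integral_eq_integral[OF mf af]
    have i1: "integrable lborel (\<lambda>\<tau>. P t \<tau>)" using S(1) by (simp add: Pf)
    have "(LINT \<tau>|lborel. P t \<tau>) = integral {a..t} f" using S(2) by (simp add: Pf)
    also have "\<dots> = c * integral {a..t} (\<lambda>\<tau>. (t - \<tau>) powr (-\<beta>) * h \<tau>)"
      unfolding f_def by (simp add: mult.left_commute)
    finally have i2: "(LINT \<tau>|lborel. P t \<tau>) = c * integral {a..t} (\<lambda>\<tau>. (t - \<tau>) powr (-\<beta>) * h \<tau>)" .
    define D where "D \<tau> = (t - \<tau>) powr (-\<beta>) * (Mh * \<bar>c\<bar>)" for \<tau>
    have mD: "D \<in> borel_measurable borel" unfolding D_def by measurable
    have aD: "D absolutely_integrable_on {a..t}"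
      unfolding D_def by (rule absolutely_integrable_powr_diff_mult) (use True be in auto)
    note SD = lborel_indicator_integral_eq_integral[OF mD aD]
    have "(LINT \<tau>|lborel. norm (P t \<tau>)) \<le> (LINT \<tau>|lborel. indicator {a..t} \<tau> * D \<tau>)"
    proof (rule integral_mono)
      show "integrable lborel (\<lambda>\<tau>. norm (P t \<tau>))" using i1 by simp
      show "integrable lborel (\<lambda>\<tau>. indicator {a..t} \<tau> * D \<tau>)" by (rule SD(1))
      fix \<tau> :: real
      show "norm (P t \<tau>) \<le> indicator {a..t} \<tau> * D \<tau>"
      proof (cases "\<tau> \<in> {a..t}")
        case True2: True
        have "norm (P t \<tau>) = (t - \<tau>) powr (-\<beta>) * (\<bar>c\<bar> * \<bar>h \<tau>\<bar>)"
          using True2 by (simp add: Pf f_def abs_mult)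
        also have "\<dots> \<le> (t - \<tau>) powr (-\<beta>) * (\<bar>c\<bar> * Mh)"
          using Mh[of \<tau>] True True2 by (intro mult_left_mono) auto
        finally show ?thesis using True2 by (simp add: D_def mult_ac)
      qed (simp add: Pf)
    qed
    also have "\<dots> = integral {a..t} D" by (rule SD(2))
    also have "\<dots> = Mh * \<bar>c\<bar> * ((t - a) powr (1 - \<beta>) / (1 - \<beta>))"
      using integral_unique[OF has_integral_powr_diff_left[of a t "-\<beta>"]] True be
      unfolding D_def by (simp add: mult.commute)
    also have "\<dots> \<le> Mh * (M\<phi> * (b - t) powr (\<alpha> - 1)) * ((b - a) powr (1 - \<beta>) / (1 - \<beta>))"
    proof (intro mult_mono mult_left_mono divide_right_mono powr_mono2)
      show "\<bar>c\<bar> \<le> M\<phi> * (b - t) powr (\<alpha> - 1)"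
        unfolding c_def using mult_left_mono[OF M\<phi>[OF True], of "(b - t) powr (\<alpha> - 1)"]
        by (simp add: abs_mult mult.commute)
    qed (use True be Mh0 M\<phi>0 in auto)
    also have "\<dots> = K * (indicator {a..b} t * (b - t) powr (\<alpha> - 1))"
      using True by (simp add: K_def mult_ac)
    finally show ?thesis using i1 i2 True by (simp add: c_def)
  qed

  have per_tau: "(LINT t|lborel. P t \<tau>) = (if \<tau> \<in> {a..b} then h \<tau> * integral {\<tau>..b} (\<lambda>t. (t - \<tau>) powr (-\<beta>) * ((b - t) powr (\<alpha> - 1) * \<phi> t)) else 0)" for \<tau>
  proof (cases "\<tau> \<in> {a..<b}")
    case False
    then have "P t \<tau> = 0" for t by (auto simp: P_def)
    moreover have "\<tau> \<in> {a..b} \<Longrightarrow> \<tau> = b" using False by auto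
    ultimately show ?thesis by auto
  next
    case True
    define f where "f t = (t - \<tau>) powr (-\<beta>) * ((b - t) powr (\<alpha> - 1) * (\<phi>' t * h \<tau>))" for t
    have Pf: "P t \<tau> = indicator {\<tau>..b} t * f t" for t
      using True by (auto simp: P_def f_def)
    have mf: "f \<in> borel_measurable borel" unfolding f_def by measurable
    have cf: "continuous_on {\<tau>..b} (\<lambda>t. \<phi>' t * h \<tau>)"
    proof -
      have "continuous_on {\<tau>..b} (\<lambda>t. \<phi> t * h \<tau>)"
        using True by (intro continuous_intros continuous_on_subset[OF \<phi>]) auto
      then show ?thesis by (rule continuous_on_eq) (use True in \<open>auto simp: \<phi>'_eq\<close>)
    qed
    have af: "f absolutely_integrable_on {\<tau>..b}"
      unfolding f_def by (rule absolutely_integrable_two_singular_kernels[OF _ al be cf]) (use True in auto)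
    note S = lborel_indicator_integral_eq_integral[OF mf af]
    have "(LINT t|lborel. P t \<tau>) = integral {\<tau>..b} f" using S(2) by (simp add: Pf)
    also have "\<dots> = integral {\<tau>..b} (\<lambda>t. h \<tau> * ((t - \<tau>) powr (-\<beta>) * ((b - t) powr (\<alpha> - 1) * \<phi> t)))"
      by (rule integral_cong) (use True in \<open>auto simp: f_def \<phi>'_eq mult_ac\<close>)
    also have "\<dots> = h \<tau> * integral {\<tau>..b} (\<lambda>t. (t - \<tau>) powr (-\<beta>) * ((b - t) powr (\<alpha> - 1) * \<phi> t))"
      by simp
    finally show ?thesis using True by simp
  qed

  have wint: "integrable lborel (\<lambda>t. indicator {a..b} t * (b - t) powr (\<alpha> - 1))"
  proof -
    have "(\<lambda>t. (b - t) powr (\<alpha> - 1)) \<in> borel_measurable borel" by measurable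
    moreover have "(\<lambda>t. (b - t) powr (\<alpha> - 1)) absolutely_integrable_on {a..b}"
      using absolutely_integrable_powr_diff_mult[of a b "\<alpha> - 1" "\<lambda>_. 1"] ab al by simp
    ultimately show ?thesis by (rule lborel_indicator_integral_eq_integral(1))
  qed
  have intP: "integrable (lborel \<Otimes>\<^sub>M lborel) (\<lambda>(t, \<tau>). P t \<tau>)"
  proof (rule lborel_pair.Fubini_integrable)
    show "(\<lambda>(t, \<tau>). P t \<tau>) \<in> borel_measurable (lborel \<Otimes>\<^sub>M lborel)" by (rule mP)
    show "integrable lborel (\<lambda>t. LINT \<tau>|lborel. norm ((\<lambda>(t, \<tau>). P t \<tau>) (t, \<tau>)))"
    proof (rule Bochner_Integration.integrable_bound)
      show "integrable lborel (\<lambda>t. K * (indicator {a..b} t * (b - t) powr (\<alpha> - 1)))"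
        using wint by simp
      show "(\<lambda>t. LINT \<tau>|lborel. norm ((\<lambda>(t, \<tau>). P t \<tau>) (t, \<tau>))) \<in> borel_measurable lborel"
        by measurable
      show "AE t in lborel. norm (LINT \<tau>|lborel. norm ((\<lambda>(t, \<tau>). P t \<tau>) (t, \<tau>)))
          \<le> norm (K * (indicator {a..b} t * (b - t) powr (\<alpha> - 1)))"
      proof (intro AE_I2)
        fix t :: real
        have "0 \<le> (LINT \<tau>|lborel. norm (P t \<tau>))" by simp
        then show "norm (LINT \<tau>|lborel. norm ((\<lambda>(t, \<tau>). P t \<tau>) (t, \<tau>)))
          \<le> norm (K * (indicator {a..b} t * (b - t) powr (\<alpha> - 1)))"
        proof -
          have "(LINT \<tau>|lborel. norm (P t \<tau>)) \<le> K * (indicator {a..b} t * (b - t) powr (\<alpha> - 1))"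
            using per_t[of t] by blast
          then show ?thesis using \<open>0 \<le> (LINT \<tau>|lborel. norm (P t \<tau>))\<close> by simp
        qed
      qed
    qed
    show "AE t in lborel. integrable lborel (\<lambda>\<tau>. (\<lambda>(t, \<tau>). P t \<tau>) (t, \<tau>))"
      using per_t by simp
  qed
  have intP': "integrable (lborel \<Otimes>\<^sub>M lborel) (case_prod P)" using intP by simp
  have fub: "(LINT \<tau>|lborel. LINT t|lborel. P t \<tau>) = (LINT t|lborel. LINT \<tau>|lborel. P t \<tau>)"
    by (rule lborel_pair.Fubini_integral[OF intP'])
  have lhs: "(LINT t|lborel. LINT \<tau>|lborel. P t \<tau>) =
      integral {a..b} (\<lambda>t. ((b - t) powr (\<alpha> - 1) * \<phi> t) * integral {a..t} (\<lambda>\<tau>. (t - \<tau>) powr (-\<beta>) * h \<tau>))"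
    by (rule lborel_integral_eq_integral_restrict) (use lborel_pair.integrable_fst[OF intP'] per_t in auto)
  have rhs: "(LINT \<tau>|lborel. LINT t|lborel. P t \<tau>) =
      integral {a..b} (\<lambda>\<tau>. h \<tau> * integral {\<tau>..b} (\<lambda>t. (t - \<tau>) powr (-\<beta>) * ((b - t) powr (\<alpha> - 1) * \<phi> t)))"
    by (rule lborel_integral_eq_integral_restrict) (use lborel_pair.integrable_snd[OF intP'] per_tau in auto)
  show ?thesis using fub lhs rhs by simp
qed

lemma fractional_integration_by_parts:
  fixes g \<phi> \<eta> :: "real \<Rightarrow> real"
  assumes ab: "a < b" and al: "0 < \<alpha>" "\<alpha> < 1" and be: "0 < \<beta>" "\<beta> < 1"
    and \<phi>: "continuous_on {a..b} \<phi>" and g: "\<And>t. t \<in> {a..b} \<Longrightarrow> g t = (b - t) powr (\<alpha> - 1) * \<phi> t"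
    and \<eta>: "test_function a b \<eta>"
    and R_diff: "\<And>t. t \<in> {a<..<b} \<Longrightarrow> rRLI (1 - \<beta>) b g differentiable (at t)"
    and D_cont: "continuous_on {a<..<b} (rRLD \<beta> b g)"
  shows "integral {a..b} (\<lambda>t. g t * lCD \<beta> a \<eta> t) = integral {a..b} (\<lambda>t. \<eta> t * rRLD \<beta> b g t)"
proof -
  define R where "R = rRLI (1 - \<beta>) b g"
  have R_eq: "R \<tau> = integral {\<tau>..b} (\<lambda>t. (t - \<tau>) powr (-\<beta>) * ((b - t) powr (\<alpha> - 1) * \<phi> t)) / Gamma (1 - \<beta>)"
    if "\<tau> \<in> {a..b}" for \<tau>
  proof -
    have "integral {\<tau>..b} (\<lambda>t. (t - \<tau>) powr (-\<beta>) * g t)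
        = integral {\<tau>..b} (\<lambda>t. (t - \<tau>) powr (-\<beta>) * ((b - t) powr (\<alpha> - 1) * \<phi> t))"
      by (rule integral_cong) (use that in \<open>simp add: g\<close>)
    then show ?thesis unfolding R_def rRLI_def by simp
  qed
  have "integral {a..b} (\<lambda>t. g t * lCD \<beta> a \<eta> t)
      = integral {a..b} (\<lambda>t. ((b - t) powr (\<alpha> - 1) * \<phi> t)
          * integral {a..t} (\<lambda>\<tau>. (t - \<tau>) powr (-\<beta>) * deriv \<eta> \<tau>)) / Gamma (1 - \<beta>)"
    by (subst integral_divide[symmetric]) (rule integral_cong, simp add: g lCD_eq_integral)
  also have "\<dots> = integral {a..b} (\<lambda>\<tau>. deriv \<eta> \<tau>
          * integral {\<tau>..b} (\<lambda>t. (t - \<tau>) powr (-\<beta>) * ((b - t) powr (\<alpha> - 1) * \<phi> t))) / Gamma (1 - \<beta>)"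
    by (simp add: fractional_fubini[OF ab al be \<phi> test_function_continuous_deriv[OF \<eta>]])
  also have "\<dots> = integral {a..b} (\<lambda>\<tau>. deriv \<eta> \<tau> * R \<tau>)"
    by (subst integral_divide[symmetric]) (rule integral_cong, simp add: R_eq)
  also have "\<dots> = integral {a..b} (\<lambda>t. \<eta> t * rRLD \<beta> b g t)"
  proof -
    obtain p q where pq: "a < p" "p \<le> q" "q < b" and vanish: "\<And>t. t \<notin> {p<..<q} \<Longrightarrow> \<eta> t = 0"
      and vanish': "\<And>t. t \<notin> {p<..<q} \<Longrightarrow> deriv \<eta> t = 0"
      using test_function_support[OF \<eta>] by blast
    have R_deriv: "(R has_real_derivative deriv R t) (at t)" if "t \<in> {p..q}" for t
      using R_diff[of t] pq that unfolding R_def by (simp add: DERIV_deriv_iff_real_differentiable)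
    have "((\<lambda>t. deriv \<eta> t * R t + \<eta> t * deriv R t) has_integral \<eta> q * R q - \<eta> p * R p) {p..q}"
    proof (rule fundamental_theorem_of_calculus[OF pq(2)])
      fix t assume "t \<in> {p..q}"
      have "((\<lambda>t. \<eta> t * R t) has_real_derivative deriv \<eta> t * R t + \<eta> t * deriv R t) (at t)"
        using DERIV_mult[OF test_function_has_real_derivative[OF \<eta>] R_deriv[OF \<open>t \<in> {p..q}\<close>]]
        by (simp add: mult.commute)
      then show "((\<lambda>t. \<eta> t * R t) has_vector_derivative deriv \<eta> t * R t + \<eta> t * deriv R t) (at t within {p..q})"
        by (simp add: has_real_derivative_iff_has_vector_derivative[symmetric] has_field_derivative_at_within)
    qed
    moreover have "\<eta> p = 0" "\<eta> q = 0" using vanish[of p] vanish[of q] by auto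
    moreover have "deriv R t = - rRLD \<beta> b g t" for t unfolding rRLD_def R_def by simp
    ultimately have FTC: "((\<lambda>t. deriv \<eta> t * R t - \<eta> t * rRLD \<beta> b g t) has_integral 0) {p..q}" by simp
    have "continuous_on {p..q} (\<lambda>t. \<eta> t * rRLD \<beta> b g t)"
      using pq by (intro continuous_on_mult test_function_continuous[OF \<eta>] continuous_on_subset[OF D_cont]) auto
    then have ibp: "((\<lambda>t. \<eta> t * rRLD \<beta> b g t) has_integral integral {p..q} (\<lambda>t. \<eta> t * rRLD \<beta> b g t)) {p..q}"
      by (intro integrable_integral integrable_continuous_interval)
    from has_integral_add[OF FTC ibp]
    have "((\<lambda>t. deriv \<eta> t * R t) has_integral integral {p..q} (\<lambda>t. \<eta> t * rRLD \<beta> b g t)) {p..q}" by simp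
    then have "((\<lambda>t. deriv \<eta> t * R t) has_integral integral {p..q} (\<lambda>t. \<eta> t * rRLD \<beta> b g t)) {a..b}"
    proof (rule has_integral_on_superset)
      show "deriv \<eta> t * R t = 0" if "t \<notin> {p..q}" for t
      proof -
        have "t \<notin> {p<..<q}" using that by auto
        then show ?thesis using vanish' by simp
      qed
    qed (use pq in auto)
    moreover have "((\<lambda>t. \<eta> t * rRLD \<beta> b g t) has_integral integral {p..q} (\<lambda>t. \<eta> t * rRLD \<beta> b g t)) {a..b}"
    proof (rule has_integral_on_superset[OF ibp])
      show "\<eta> t * rRLD \<beta> b g t = 0" if "t \<notin> {p..q}" for t
      proof -
        have "t \<notin> {p<..<q}" using that by auto
        then show ?thesis using vanish by simp
      qed
    qed (use pq in auto)
    ultimately show ?thesis by (simp add: integral_unique)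
  qed
  finally show ?thesis .
qed

section \<open>Lagrange multipliers for two-parameter families\<close>

definition has_linear_approx_at_0 :: "(real \<Rightarrow> real \<Rightarrow> real) \<Rightarrow> real \<Rightarrow> real \<Rightarrow> real \<Rightarrow> bool" where
  "has_linear_approx_at_0 \<phi> c j1 j2 \<longleftrightarrow> (\<forall>\<epsilon>>0. \<exists>\<delta>>0. \<forall>e1 e2. \<bar>e1\<bar> + \<bar>e2\<bar> < \<delta> \<longrightarrow>
     \<bar>\<phi> e1 e2 - c - j1 * e1 - j2 * e2\<bar> \<le> \<epsilon> * (\<bar>e1\<bar> + \<bar>e2\<bar>))"

lemma has_linear_approx_at_0D:
  assumes "has_linear_approx_at_0 \<phi> c j1 j2" "0 < \<epsilon>"
  obtains \<delta> where "0 < \<delta>"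
    "\<And>e1 e2. \<bar>e1\<bar> + \<bar>e2\<bar> < \<delta> \<Longrightarrow> \<bar>\<phi> e1 e2 - c - j1 * e1 - j2 * e2\<bar> \<le> \<epsilon> * (\<bar>e1\<bar> + \<bar>e2\<bar>)"
  using assms unfolding has_linear_approx_at_0_def by blast

lemma level_curve_through_origin:
  assumes \<psi>: "has_linear_approx_at_0 \<psi> \<xi> p1 p2" and cont: "\<And>e1. continuous_on UNIV (\<psi> e1)" and "p2 \<noteq> 0"
  obtains \<delta> K where "0 < \<delta>" "0 < K" "\<And>s. \<bar>s\<bar> < \<delta> \<Longrightarrow> \<exists>e2. \<bar>e2\<bar> \<le> K * \<bar>s\<bar> \<and> \<psi> s e2 = \<xi>"
proof -
  define K where "K = 2 * (\<bar>p1\<bar> + 1) / \<bar>p2\<bar>"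
  have K: "0 < K" "\<bar>p2\<bar> * K = 2 * (\<bar>p1\<bar> + 1)" using \<open>p2 \<noteq> 0\<close> by (auto simp: K_def)
  obtain \<delta> where "0 < \<delta>" and approx: "\<And>e1 e2. \<bar>e1\<bar> + \<bar>e2\<bar> < \<delta> \<Longrightarrow>
      \<bar>\<psi> e1 e2 - \<xi> - p1 * e1 - p2 * e2\<bar> \<le> 1 / (1 + K) * (\<bar>e1\<bar> + \<bar>e2\<bar>)"
    using has_linear_approx_at_0D[OF \<psi>, of "1 / (1 + K)"] K(1) by auto
  show ?thesis
  proof (rule that[of "\<delta> / (1 + K)" K])
    fix s assume s: "\<bar>s\<bar> < \<delta> / (1 + K)"
    define t where "t = \<bar>s\<bar>"
    have t: "0 \<le> t" "(1 + K) * t < \<delta>" using s K(1) by (auto simp: t_def field_simps)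
    \<comment> \<open>along the vertical segment of half-length K t through (s, 0) the error is at most t\<close>
    have err: "\<bar>\<psi> s e2 - \<xi> - p1 * s - p2 * e2\<bar> \<le> t" if "\<bar>e2\<bar> \<le> K * t" for e2
    proof -
      have small: "\<bar>s\<bar> + \<bar>e2\<bar> \<le> (1 + K) * t" using that by (simp add: t_def algebra_simps)
      then have "\<bar>\<psi> s e2 - \<xi> - p1 * s - p2 * e2\<bar> \<le> 1 / (1 + K) * (\<bar>s\<bar> + \<bar>e2\<bar>)"
        using t(2) by (intro approx) linarith
      also have "\<dots> \<le> 1 / (1 + K) * ((1 + K) * t)" using small K(1) by (intro mult_left_mono) auto
      also have "\<dots> = t" using K(1) by simp
      finally show ?thesis .
    qed
    have Kt: "\<bar>K * t\<bar> \<le> K * t" "\<bar>- (K * t)\<bar> \<le> K * t" using K(1) t(1) by auto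
    have up: "\<bar>\<psi> s (K * t) - \<xi> - p1 * s - p2 * (K * t)\<bar> \<le> t" by (rule err[OF Kt(1)])
    have down: "\<bar>\<psi> s (- (K * t)) - \<xi> - p1 * s + p2 * (K * t)\<bar> \<le> t" using err[OF Kt(2)] by simp
    have p1s: "- (\<bar>p1\<bar> * t) \<le> p1 * s" "p1 * s \<le> \<bar>p1\<bar> * t"
      using abs_ge_self[of "p1 * s"] abs_ge_minus_self[of "p1 * s"] by (simp_all add: t_def abs_mult)
    have "\<bar>p2\<bar> * (K * t) = (\<bar>p2\<bar> * K) * t" by (rule mult.assoc[symmetric])
    also have "\<dots> = 2 * (\<bar>p1\<bar> * t) + 2 * t" unfolding K(2) by (simp add: distrib_left distrib_right)
    finally have p2Kt: "\<bar>p2\<bar> * (K * t) = 2 * (\<bar>p1\<bar> * t) + 2 * t" .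
    have "\<exists>e2. - (K * t) \<le> e2 \<and> e2 \<le> K * t \<and> \<psi> s e2 = \<xi>"
    proof (cases "0 < p2")
      case True
      then have "p2 * (K * t) = 2 * (\<bar>p1\<bar> * t) + 2 * t" using p2Kt by simp
      then have "\<psi> s (- (K * t)) \<le> \<xi>" "\<xi> \<le> \<psi> s (K * t)"
        using up down p1s t(1) unfolding abs_le_iff by linarith+
      then show ?thesis using K(1) t(1) by (intro IVT' continuous_on_subset[OF cont]) auto
    next
      case False
      then have "p2 * (K * t) = - (2 * (\<bar>p1\<bar> * t) + 2 * t)" using p2Kt \<open>p2 \<noteq> 0\<close> by simp
      then have "\<xi> \<le> \<psi> s (- (K * t))" "\<psi> s (K * t) \<le> \<xi>"
        using up down p1s t(1) unfolding abs_le_iff by linarith+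
      then show ?thesis using K(1) t(1) by (intro IVT2' continuous_on_subset[OF cont]) auto
    qed
    then obtain e2 where "- (K * t) \<le> e2" "e2 \<le> K * t" "\<psi> s e2 = \<xi>" by blast
    then show "\<exists>e2. \<bar>e2\<bar> \<le> K * \<bar>s\<bar> \<and> \<psi> s e2 = \<xi>" unfolding t_def by (intro exI[of _ e2]) auto
  qed (use \<open>0 < \<delta>\<close> K(1) in auto)
qed

lemma lagrange_multiplier_two_parameters:
  assumes \<phi>: "has_linear_approx_at_0 \<phi> \<phi>0 j1 j2" and \<psi>: "has_linear_approx_at_0 \<psi> \<xi> p1 p2"
    and cont: "\<And>e1. continuous_on UNIV (\<psi> e1)"
    and minimal: "\<And>e1 e2. \<psi> e1 e2 = \<xi> \<Longrightarrow> \<phi>0 \<le> \<phi> e1 e2" and "p2 \<noteq> 0"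
  shows "j1 * p2 = j2 * p1"
proof (rule ccontr)
  assume "j1 * p2 \<noteq> j2 * p1"
  define A where "A = j1 - j2 * p1 / p2"
  have "A \<noteq> 0" using \<open>j1 * p2 \<noteq> j2 * p1\<close> \<open>p2 \<noteq> 0\<close> by (auto simp: A_def field_simps)
  obtain \<delta>0 K where "0 < \<delta>0" "0 < K" and level: "\<And>s. \<bar>s\<bar> < \<delta>0 \<Longrightarrow> \<exists>e2. \<bar>e2\<bar> \<le> K * \<bar>s\<bar> \<and> \<psi> s e2 = \<xi>"
    using level_curve_through_origin[OF \<psi> cont \<open>p2 \<noteq> 0\<close>] by blast
  define Q where "Q = 1 + \<bar>j2 / p2\<bar>"
  define \<epsilon> where "\<epsilon> = \<bar>A\<bar> / (2 * (1 + K) * Q)"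
  have "0 < Q" unfolding Q_def by (simp add: add_pos_nonneg)
  then have "0 < \<epsilon>" using \<open>A \<noteq> 0\<close> \<open>0 < K\<close> unfolding \<epsilon>_def by simp
  have \<epsilon>Q: "\<epsilon> * (1 + K) * Q = \<bar>A\<bar> / 2" 
  proof -
    have "(1 + K) * Q \<noteq> 0" using \<open>0 < K\<close> \<open>0 < Q\<close> by simp
    moreover have "\<epsilon> * (1 + K) * Q = \<bar>A\<bar> / (2 * ((1 + K) * Q)) * ((1 + K) * Q)"
      unfolding \<epsilon>_def by (simp only: mult.assoc)
    ultimately show ?thesis by simp
  qed
  obtain \<delta>1 where "0 < \<delta>1" and approx\<phi>: "\<And>e1 e2. \<bar>e1\<bar> + \<bar>e2\<bar> < \<delta>1 \<Longrightarrow>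
      \<bar>\<phi> e1 e2 - \<phi>0 - j1 * e1 - j2 * e2\<bar> \<le> \<epsilon> * (\<bar>e1\<bar> + \<bar>e2\<bar>)"
    using has_linear_approx_at_0D[OF \<phi> \<open>0 < \<epsilon>\<close>] by blast
  obtain \<delta>2 where "0 < \<delta>2" and approx\<psi>: "\<And>e1 e2. \<bar>e1\<bar> + \<bar>e2\<bar> < \<delta>2 \<Longrightarrow>
      \<bar>\<psi> e1 e2 - \<xi> - p1 * e1 - p2 * e2\<bar> \<le> \<epsilon> * (\<bar>e1\<bar> + \<bar>e2\<bar>)"
    using has_linear_approx_at_0D[OF \<psi> \<open>0 < \<epsilon>\<close>] by blast
  \<comment> \<open>move along the constraint in the direction in which the reduced gradient A decreases \<phi>\<close>
  define m where "m = min \<delta>1 \<delta>2 / (1 + K)"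
  have m: "0 < m" "(1 + K) * m = min \<delta>1 \<delta>2"
    using \<open>0 < \<delta>1\<close> \<open>0 < \<delta>2\<close> \<open>0 < K\<close> by (simp_all add: m_def)
  define t where "t = min \<delta>0 m / 2"
  define s where "s = (if 0 < A then - t else t)"
  have "0 < t" "t < \<delta>0" "t < m" using \<open>0 < \<delta>0\<close> m(1) by (auto simp: t_def)
  moreover have "(1 + K) * t < (1 + K) * m" using \<open>t < m\<close> \<open>0 < K\<close> by simp
  ultimately have t: "0 < t" "t < \<delta>0" "(1 + K) * t < \<delta>1" "(1 + K) * t < \<delta>2"
    using m(2) min.cobounded1[of \<delta>1 \<delta>2] min.cobounded2[of \<delta>1 \<delta>2] by linarith+
  have s: "\<bar>s\<bar> = t" "A * s = - (\<bar>A\<bar> * t)" using t(1) by (auto simp: s_def)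
  obtain e2 where e2: "\<bar>e2\<bar> \<le> K * t" "\<psi> s e2 = \<xi>" using level[of s] s(1) t(2) by auto
  have small: "\<bar>s\<bar> + \<bar>e2\<bar> \<le> (1 + K) * t" using s(1) e2(1) by (simp add: algebra_simps)
  define R1 where "R1 = \<phi> s e2 - \<phi>0 - j1 * s - j2 * e2"
  define R2 where "R2 = \<psi> s e2 - \<xi> - p1 * s - p2 * e2"
  have R_bound: "\<bar>R1\<bar> \<le> \<epsilon> * ((1 + K) * t)" "\<bar>R2\<bar> \<le> \<epsilon> * ((1 + K) * t)"
    using approx\<phi>[of s e2] approx\<psi>[of s e2] small t(3,4)
      mult_left_mono[OF small, of \<epsilon>] \<open>0 < \<epsilon>\<close> unfolding R1_def R2_def by linarith+
  have "\<phi> s e2 - \<phi>0 = A * s + (R1 - j2 / p2 * R2)"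
    using e2(2) \<open>p2 \<noteq> 0\<close> unfolding A_def R1_def R2_def by (simp add: field_simps)
  also have "\<dots> \<le> - (\<bar>A\<bar> * t) + (\<bar>R1\<bar> + \<bar>j2 / p2\<bar> * \<bar>R2\<bar>)"
    using s(2) abs_ge_self[of R1] abs_ge_minus_self[of "j2 / p2 * R2"] by (simp add: abs_mult)
  also have "\<dots> \<le> - (\<bar>A\<bar> * t) + (\<epsilon> * ((1 + K) * t) + \<bar>j2 / p2\<bar> * (\<epsilon> * ((1 + K) * t)))"
    using R_bound mult_left_mono[OF R_bound(2), of "\<bar>j2 / p2\<bar>"] by simp
  also have "\<dots> = - (\<bar>A\<bar> * t) + \<epsilon> * (1 + K) * Q * t"
    by (simp add: Q_def algebra_simps add_divide_distrib)
  also have "\<dots> < 0" using t(1) \<open>A \<noteq> 0\<close> unfolding \<epsilon>Q by simp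
  finally have "\<phi> s e2 < \<phi>0" by simp
  with minimal[OF e2(2)] show False by simp
qed

lemma has_linear_approx_at_0_isCont:
  assumes "has_linear_approx_at_0 \<phi> c j1 j2" "\<phi> 0 0 = c"
  shows "isCont (\<phi> 0) 0"
proof -
  obtain \<delta> where "0 < \<delta>" and approx: "\<And>e1 e2. \<bar>e1\<bar> + \<bar>e2\<bar> < \<delta> \<Longrightarrow>
      \<bar>\<phi> e1 e2 - \<phi> 0 0 - j1 * e1 - j2 * e2\<bar> \<le> 1 * (\<bar>e1\<bar> + \<bar>e2\<bar>)"
    using has_linear_approx_at_0D[OF assms(1), of 1] assms(2) by auto
  have "((\<lambda>h. \<phi> 0 h - \<phi> 0 0) \<longlongrightarrow> 0) (at 0)"
  proof (rule Lim_null_comparison)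
    show "\<forall>\<^sub>F h in at 0. norm (\<phi> 0 h - \<phi> 0 0) \<le> (\<bar>j2\<bar> + 1) * \<bar>h\<bar>"
      unfolding eventually_at
    proof (intro exI[of _ \<delta>] conjI ballI impI \<open>0 < \<delta>\<close>)
      fix h :: real assume "h \<noteq> 0 \<and> dist h 0 < \<delta>"
      then have "\<bar>h\<bar> < \<delta>" by simp
      then have "\<bar>\<phi> 0 h - \<phi> 0 0 - j2 * h\<bar> \<le> \<bar>h\<bar>" using approx[of 0 h] by simp
      then show "norm (\<phi> 0 h - \<phi> 0 0) \<le> (\<bar>j2\<bar> + 1) * \<bar>h\<bar>"
        using abs_triangle_ineq[of "\<phi> 0 h - \<phi> 0 0 - j2 * h" "j2 * h"] by (simp add: abs_mult distrib_right)
    qed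
    show "((\<lambda>h. (\<bar>j2\<bar> + 1) * \<bar>h\<bar>) \<longlongrightarrow> 0) (at (0::real))"
      by (auto intro!: tendsto_eq_intros)
  qed
  then show ?thesis by (simp add: isCont_def LIM_zero_iff)
qed

section \<open>The fractional isoperimetric problem\<close>

lemma C1_interval_continuous: "C1_interval a b y \<Longrightarrow> continuous_on {a..b} y"
  unfolding C1_interval_def continuous_on_eq_continuous_within by (metis DERIV_continuous)

locale fractional_problem =
  fixes a b \<alpha> \<beta> :: real
  assumes a_less_b: "a < b" and alpha: "0 < \<alpha>" "\<alpha> < 1" and beta: "0 < \<beta>" "\<beta> < 1"
begin

definition frac_functional :: "(real \<Rightarrow> real \<Rightarrow> real \<Rightarrow> real) \<Rightarrow> (real \<Rightarrow> real) \<Rightarrow> real" where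
  "frac_functional L z = lRLI \<alpha> a (\<lambda>t. L t (z t) (lCD \<beta> a z t)) b"

definition first_variation :: "(real \<Rightarrow> real \<Rightarrow> real \<Rightarrow> real) \<Rightarrow> (real \<Rightarrow> real) \<Rightarrow> (real \<Rightarrow> real) \<Rightarrow> real" where
  "first_variation L y \<eta> =
     lRLI \<alpha> a (\<lambda>t. d2 L t (y t) (lCD \<beta> a y t) * \<eta> t + d3 L t (y t) (lCD \<beta> a y t) * lCD \<beta> a \<eta> t) b"

definition euler_lagrange :: "(real \<Rightarrow> real \<Rightarrow> real \<Rightarrow> real) \<Rightarrow> (real \<Rightarrow> real) \<Rightarrow> real \<Rightarrow> real" where
  "euler_lagrange L y t = (b - t) powr (\<alpha> - 1) * d2 L t (y t) (lCD \<beta> a y t)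
     + rRLD \<beta> b (\<lambda>\<tau>. (b - \<tau>) powr (\<alpha> - 1) * d3 L \<tau> (y \<tau>) (lCD \<beta> a y \<tau>)) t"

definition euler_lagrange_regular :: "(real \<Rightarrow> real \<Rightarrow> real \<Rightarrow> real) \<Rightarrow> (real \<Rightarrow> real) \<Rightarrow> bool" where
  "euler_lagrange_regular L y \<longleftrightarrow>
     continuous_on {a<..<b} (\<lambda>t. (b - t) powr (\<alpha> - 1) * d2 L t (y t) (lCD \<beta> a y t)) \<and>
     (\<forall>t\<in>{a<..<b}. (\<lambda>s. rRLI (1 - \<beta>) b (\<lambda>\<tau>. (b - \<tau>) powr (\<alpha> - 1) * d3 L \<tau> (y \<tau>) (lCD \<beta> a y \<tau>)) s)
        differentiable (at t)) \<and>
     continuous_on {a<..<b} (rRLD \<beta> b (\<lambda>\<tau>. (b - \<tau>) powr (\<alpha> - 1) * d3 L \<tau> (y \<tau>) (lCD \<beta> a y \<tau>)))"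

lemma continuous_on_euler_lagrange:
  "euler_lagrange_regular L y \<Longrightarrow> continuous_on {a<..<b} (euler_lagrange L y)"
  unfolding euler_lagrange_regular_def euler_lagrange_def[abs_def] by (intro continuous_on_add) auto

lemma lRLI_cong: "(\<And>t. t \<in> {a..b} \<Longrightarrow> f t = g t) \<Longrightarrow> lRLI \<alpha> a f b = lRLI \<alpha> a g b"
  unfolding lRLI_def by (metis (no_types, lifting) integral_cong)

lemma integrable_weight_mult:
  "continuous_on {a..b} f \<Longrightarrow> (\<lambda>t. (b - t) powr (\<alpha> - 1) * f t) integrable_on {a..b}"
  using a_less_b alpha by (intro integrable_powr_diff_mult) auto

lemma lRLI_diff:
  assumes "continuous_on {a..b} f" "continuous_on {a..b} g"
  shows "lRLI \<alpha> a (\<lambda>t. f t - g t) b = lRLI \<alpha> a f b - lRLI \<alpha> a g b"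
  unfolding lRLI_def
  by (simp add: right_diff_distrib integral_diff integrable_weight_mult[OF assms(1)] integrable_weight_mult[OF assms(2)])

lemma lRLI_mult_right: "lRLI \<alpha> a (\<lambda>t. f t * c) b = lRLI \<alpha> a f b * c"
  unfolding lRLI_def by (simp add: mult.assoc[symmetric])

lemma abs_lRLI_le:
  assumes "continuous_on {a..b} f" "\<And>t. t \<in> {a..b} \<Longrightarrow> \<bar>f t\<bar> \<le> B"
  shows "\<bar>lRLI \<alpha> a f b\<bar> \<le> B * ((b - a) powr \<alpha> / (\<alpha> * Gamma \<alpha>))"
proof -
  have "\<bar>integral {a..b} (\<lambda>t. (b - t) powr (\<alpha> - 1) * f t)\<bar> \<le> B * ((b - a) powr \<alpha> / \<alpha>)"
    using abs_integral_powr_diff_mult_le[of a b "\<alpha> - 1" f B] assms a_less_b alpha by simp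
  then show ?thesis using Gamma_real_pos[OF alpha(1)] unfolding lRLI_def
    by (simp add: abs_mult divide_le_eq field_simps)
qed

lemma lRLI_composition_linear_approx:
  fixes L :: "real \<Rightarrow> real \<Rightarrow> real \<Rightarrow> real" and Y V u1 v1 u2 v2 :: "real \<Rightarrow> real"
  assumes L: "C1_3 {a..b} L"
    and Y: "continuous_on {a..b} Y" and V: "continuous_on {a..b} V"
    and u1: "continuous_on {a..b} u1" and v1: "continuous_on {a..b} v1"
    and u2: "continuous_on {a..b} u2" and v2: "continuous_on {a..b} v2"
  shows "has_linear_approx_at_0
     (\<lambda>e1 e2. lRLI \<alpha> a (\<lambda>t. L t (Y t + e1 * u1 t + e2 * u2 t) (V t + e1 * v1 t + e2 * v2 t)) b)
     (lRLI \<alpha> a (\<lambda>t. L t (Y t) (V t)) b)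
     (lRLI \<alpha> a (\<lambda>t. d2 L t (Y t) (V t) * u1 t + d3 L t (Y t) (V t) * v1 t) b)
     (lRLI \<alpha> a (\<lambda>t. d2 L t (Y t) (V t) * u2 t + d3 L t (Y t) (V t) * v2 t) b)"
  unfolding has_linear_approx_at_0_def
proof (intro allI impI)
  fix \<epsilon> :: real assume "0 < \<epsilon>"
  define W where "W = (b - a) powr \<alpha> / (\<alpha> * Gamma \<alpha>)"
  have "0 \<le> W" using alpha Gamma_real_pos[OF alpha(1)] by (simp add: W_def)
  obtain MY where MY: "\<And>t. t \<in> {a..b} \<Longrightarrow> \<bar>Y t\<bar> \<le> MY" using continuous_on_Icc_bound[OF Y] by blast
  obtain MV where MV: "\<And>t. t \<in> {a..b} \<Longrightarrow> \<bar>V t\<bar> \<le> MV" using continuous_on_Icc_bound[OF V] by blast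
  obtain N1 where N1: "\<And>t. t \<in> {a..b} \<Longrightarrow> \<bar>u1 t\<bar> \<le> N1" using continuous_on_Icc_bound[OF u1] by blast
  obtain N2 where N2: "\<And>t. t \<in> {a..b} \<Longrightarrow> \<bar>v1 t\<bar> \<le> N2" using continuous_on_Icc_bound[OF v1] by blast
  obtain N3 where N3: "\<And>t. t \<in> {a..b} \<Longrightarrow> \<bar>u2 t\<bar> \<le> N3" using continuous_on_Icc_bound[OF u2] by blast
  obtain N4 where N4: "\<And>t. t \<in> {a..b} \<Longrightarrow> \<bar>v2 t\<bar> \<le> N4" using continuous_on_Icc_bound[OF v2] by blast
  define M where "M = max MY MV"
  define N where "N = max 1 (max (max N1 N2) (max N3 N4))"
  have "1 \<le> N" by (simp add: N_def)
  have bounds: "\<bar>Y t\<bar> \<le> M" "\<bar>V t\<bar> \<le> M" "\<bar>u1 t\<bar> \<le> N" "\<bar>v1 t\<bar> \<le> N" "\<bar>u2 t\<bar> \<le> N" "\<bar>v2 t\<bar> \<le> N"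
    if "t \<in> {a..b}" for t
    unfolding M_def N_def
    by (simp_all add: le_max_iff_disj MY[OF that] MV[OF that] N1[OF that] N2[OF that] N3[OF that] N4[OF that])
  define \<epsilon>' where "\<epsilon>' = \<epsilon> / (2 * N * W + 1)"
  have "0 \<le> 2 * N * W" using \<open>1 \<le> N\<close> \<open>0 \<le> W\<close> by simp
  then have "0 < \<epsilon>'" using \<open>0 < \<epsilon>\<close> by (simp add: \<epsilon>'_def)
  obtain d where "0 < d" and lin: "\<And>t x v h k. t \<in> {a..b} \<Longrightarrow> \<bar>x\<bar> \<le> M \<Longrightarrow> \<bar>v\<bar> \<le> M \<Longrightarrow> \<bar>h\<bar> + \<bar>k\<bar> < d \<Longrightarrow>
      \<bar>L t (x + h) (v + k) - L t x v - d2 L t x v * h - d3 L t x v * k\<bar> \<le> \<epsilon>' * (\<bar>h\<bar> + \<bar>k\<bar>)"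
    using C1_3_linearization[OF L \<open>0 < \<epsilon>'\<close>, where R = M] by blast
  show "\<exists>\<delta>>0. \<forall>e1 e2. \<bar>e1\<bar> + \<bar>e2\<bar> < \<delta> \<longrightarrow>
      \<bar>lRLI \<alpha> a (\<lambda>t. L t (Y t + e1 * u1 t + e2 * u2 t) (V t + e1 * v1 t + e2 * v2 t)) b
       - lRLI \<alpha> a (\<lambda>t. L t (Y t) (V t)) b
       - lRLI \<alpha> a (\<lambda>t. d2 L t (Y t) (V t) * u1 t + d3 L t (Y t) (V t) * v1 t) b * e1
       - lRLI \<alpha> a (\<lambda>t. d2 L t (Y t) (V t) * u2 t + d3 L t (Y t) (V t) * v2 t) b * e2\<bar>
      \<le> \<epsilon> * (\<bar>e1\<bar> + \<bar>e2\<bar>)"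
  proof (intro exI[of _ "d / (2 * N)"] conjI allI impI)
    show "0 < d / (2 * N)" using \<open>0 < d\<close> \<open>1 \<le> N\<close> by simp
    fix e1 e2 :: real assume small: "\<bar>e1\<bar> + \<bar>e2\<bar> < d / (2 * N)"
    define E where "E = \<bar>e1\<bar> + \<bar>e2\<bar>"
    have "E * (2 * N) < d" using small \<open>1 \<le> N\<close> by (simp add: E_def pos_less_divide_eq)
    define h where "h t = e1 * u1 t + e2 * u2 t" for t
    define k where "k t = e1 * v1 t + e2 * v2 t" for t
    have hk: "\<bar>h t\<bar> + \<bar>k t\<bar> \<le> 2 * N * E" if "t \<in> {a..b}" for t
    proof -
      have "\<bar>h t\<bar> \<le> \<bar>e1\<bar> * \<bar>u1 t\<bar> + \<bar>e2\<bar> * \<bar>u2 t\<bar>" unfolding h_def by (metis abs_mult abs_triangle_ineq)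
      also have "\<dots> \<le> \<bar>e1\<bar> * N + \<bar>e2\<bar> * N" using bounds[OF that] by (intro add_mono mult_left_mono) auto
      finally have "\<bar>h t\<bar> \<le> \<bar>e1\<bar> * N + \<bar>e2\<bar> * N" .
      moreover have "\<bar>k t\<bar> \<le> \<bar>e1\<bar> * \<bar>v1 t\<bar> + \<bar>e2\<bar> * \<bar>v2 t\<bar>" unfolding k_def by (metis abs_mult abs_triangle_ineq)
      moreover have "\<dots> \<le> \<bar>e1\<bar> * N + \<bar>e2\<bar> * N" using bounds[OF that] by (intro add_mono mult_left_mono) auto
      ultimately show ?thesis by (simp add: E_def algebra_simps)
    qed
    define \<rho> where "\<rho> t = L t (Y t + h t) (V t + k t) - L t (Y t) (V t) - d2 L t (Y t) (V t) * h t
      - d3 L t (Y t) (V t) * k t" for t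
    have \<rho>_bound: "\<bar>\<rho> t\<bar> \<le> \<epsilon>' * (2 * N * E)" if "t \<in> {a..b}" for t
    proof -
      have "\<bar>\<rho> t\<bar> \<le> \<epsilon>' * (\<bar>h t\<bar> + \<bar>k t\<bar>)"
        unfolding \<rho>_def using hk[OF that] \<open>E * (2 * N) < d\<close>
        by (intro lin that bounds(1,2)[OF that]) (simp add: mult.commute)
      also have "\<dots> \<le> \<epsilon>' * (2 * N * E)" using hk[OF that] \<open>0 < \<epsilon>'\<close> by (intro mult_left_mono) auto
      finally show ?thesis .
    qed
    have hk_cont: "continuous_on {a..b} h" "continuous_on {a..b} k"
      unfolding h_def k_def by (intro continuous_intros u1 v1 u2 v2)+
    have d2_cont: "continuous_on {a..b} (\<lambda>t. d2 L t (Y t) (V t))"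
      by (rule continuous_on_compose_slab[OF C1_3_continuous_d2[OF L] Y V])
    have d3_cont: "continuous_on {a..b} (\<lambda>t. d3 L t (Y t) (V t))"
      by (rule continuous_on_compose_slab[OF C1_3_continuous_d3[OF L] Y V])
    have L_cont: "continuous_on {a..b} (\<lambda>t. L t (Y t + h t) (V t + k t))"
      "continuous_on {a..b} (\<lambda>t. L t (Y t) (V t))"
      by (intro C1_3_continuous_on_curve[OF L] continuous_intros Y V hk_cont)+
    have "lRLI \<alpha> a (\<lambda>t. L t (Y t + e1 * u1 t + e2 * u2 t) (V t + e1 * v1 t + e2 * v2 t)) b
       - lRLI \<alpha> a (\<lambda>t. L t (Y t) (V t)) b
       - lRLI \<alpha> a (\<lambda>t. d2 L t (Y t) (V t) * u1 t + d3 L t (Y t) (V t) * v1 t) b * e1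
       - lRLI \<alpha> a (\<lambda>t. d2 L t (Y t) (V t) * u2 t + d3 L t (Y t) (V t) * v2 t) b * e2 = lRLI \<alpha> a \<rho> b"
    proof -
      have "\<rho> = (\<lambda>t. ((L t (Y t + h t) (V t + k t) - L t (Y t) (V t))
          - (d2 L t (Y t) (V t) * u1 t + d3 L t (Y t) (V t) * v1 t) * e1)
          - (d2 L t (Y t) (V t) * u2 t + d3 L t (Y t) (V t) * v2 t) * e2)"
        unfolding \<rho>_def h_def k_def by (simp add: algebra_simps)
      then show ?thesis
        unfolding h_def k_def
        by (simp add: lRLI_diff lRLI_mult_right add.assoc L_cont[unfolded h_def k_def add.assoc]
            continuous_intros d2_cont d3_cont u1 v1 u2 v2)
    qed
    also have "\<bar>lRLI \<alpha> a \<rho> b\<bar> \<le> \<epsilon>' * (2 * N * E) * W"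
      unfolding W_def using \<rho>_bound
      by (intro abs_lRLI_le) (auto simp: \<rho>_def intro!: continuous_intros L_cont d2_cont d3_cont hk_cont)
    also have "\<dots> = \<epsilon> * E * ((2 * N * W) / (2 * N * W + 1))"
      unfolding \<epsilon>'_def by (simp add: algebra_simps)
    also have "\<dots> \<le> \<epsilon> * E"
      by (rule mult_left_le) (use \<open>0 \<le> 2 * N * W\<close> \<open>0 < \<epsilon>\<close> in \<open>auto simp: E_def\<close>)
    finally show "\<bar>lRLI \<alpha> a (\<lambda>t. L t (Y t + e1 * u1 t + e2 * u2 t) (V t + e1 * v1 t + e2 * v2 t)) b
       - lRLI \<alpha> a (\<lambda>t. L t (Y t) (V t)) b
       - lRLI \<alpha> a (\<lambda>t. d2 L t (Y t) (V t) * u1 t + d3 L t (Y t) (V t) * v1 t) b * e1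
       - lRLI \<alpha> a (\<lambda>t. d2 L t (Y t) (V t) * u2 t + d3 L t (Y t) (V t) * v2 t) b * e2\<bar>
      \<le> \<epsilon> * (\<bar>e1\<bar> + \<bar>e2\<bar>)" by (simp add: E_def)
  qed
qed

lemma frac_functional_perturbation:
  assumes y: "C1_interval a b y" and \<eta>1: "test_function a b \<eta>1" and \<eta>2: "test_function a b \<eta>2"
  shows "frac_functional L (\<lambda>s. y s + e1 * \<eta>1 s + e2 * \<eta>2 s)
    = lRLI \<alpha> a (\<lambda>t. L t (y t + e1 * \<eta>1 t + e2 * \<eta>2 t)
        (lCD \<beta> a y t + e1 * lCD \<beta> a \<eta>1 t + e2 * lCD \<beta> a \<eta>2 t)) b"
  unfolding frac_functional_def
  by (rule lRLI_cong) (simp add: lCD_linear_combination[OF y beta(2) \<eta>1 \<eta>2])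

lemma continuous_lCD_test_function:
  "test_function a b \<eta> \<Longrightarrow> continuous_on {a..b} (lCD \<beta> a \<eta>)"
  using a_less_b beta by (intro continuous_on_lCD_test_function) auto

lemma frac_functional_linear_approx:
  assumes L: "C1_3 {a..b} L" and y: "C1_interval a b y" "continuous_on {a..b} (lCD \<beta> a y)"
    and \<eta>1: "test_function a b \<eta>1" and \<eta>2: "test_function a b \<eta>2"
  shows "has_linear_approx_at_0 (\<lambda>e1 e2. frac_functional L (\<lambda>s. y s + e1 * \<eta>1 s + e2 * \<eta>2 s))
     (frac_functional L y) (first_variation L y \<eta>1) (first_variation L y \<eta>2)"
  unfolding frac_functional_perturbation[OF y(1) \<eta>1 \<eta>2] frac_functional_def first_variation_def
  by (intro lRLI_composition_linear_approx L C1_interval_continuous[OF y(1)] y(2)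
      test_function_continuous[OF \<eta>1] test_function_continuous[OF \<eta>2]
      continuous_lCD_test_function[OF \<eta>1] continuous_lCD_test_function[OF \<eta>2])

lemma frac_functional_continuous_second:
  assumes L: "C1_3 {a..b} L" and y: "C1_interval a b y" "continuous_on {a..b} (lCD \<beta> a y)"
    and \<eta>1: "test_function a b \<eta>1" and \<eta>2: "test_function a b \<eta>2"
  shows "continuous_on UNIV (\<lambda>e2. frac_functional L (\<lambda>s. y s + e1 * \<eta>1 s + e2 * \<eta>2 s))"
proof (intro continuous_at_imp_continuous_on ballI)
  fix x :: real
  define \<Phi> where "\<Phi> e2 = frac_functional L (\<lambda>s. y s + e1 * \<eta>1 s + e2 * \<eta>2 s)" for e2
  define Y where "Y t = y t + e1 * \<eta>1 t + x * \<eta>2 t" for t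
  define V where "V t = lCD \<beta> a y t + e1 * lCD \<beta> a \<eta>1 t + x * lCD \<beta> a \<eta>2 t" for t
  define \<phi> where "\<phi> e e' = lRLI \<alpha> a (\<lambda>t. L t (Y t + e * 0 + e' * \<eta>2 t) (V t + e * 0 + e' * lCD \<beta> a \<eta>2 t)) b"
    for e e'
  \<comment> \<open>continuity in e2 at x follows from differentiability of the perturbation based at x\<close>
  have "has_linear_approx_at_0 \<phi> (lRLI \<alpha> a (\<lambda>t. L t (Y t) (V t)) b)
      (lRLI \<alpha> a (\<lambda>t. d2 L t (Y t) (V t) * 0 + d3 L t (Y t) (V t) * 0) b)
      (lRLI \<alpha> a (\<lambda>t. d2 L t (Y t) (V t) * \<eta>2 t + d3 L t (Y t) (V t) * lCD \<beta> a \<eta>2 t) b)"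
    unfolding \<phi>_def Y_def V_def
    by (intro lRLI_composition_linear_approx L continuous_intros C1_interval_continuous[OF y(1)] y(2)
        test_function_continuous[OF \<eta>1] test_function_continuous[OF \<eta>2]
        continuous_lCD_test_function[OF \<eta>1] continuous_lCD_test_function[OF \<eta>2])
  then have "isCont (\<phi> 0) 0" by (rule has_linear_approx_at_0_isCont) (simp add: \<phi>_def)
  moreover have "\<phi> 0 = (\<lambda>h. \<Phi> (x + h))"
    unfolding \<phi>_def \<Phi>_def Y_def V_def frac_functional_perturbation[OF y(1) \<eta>1 \<eta>2]
    by (simp add: algebra_simps)
  ultimately have "isCont (\<lambda>h. \<Phi> (x + h)) 0" by simp
  then show "isCont \<Phi> x" unfolding isCont_iff by (simp add: isCont_def)
qed

lemma admissible_perturbation: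
  assumes adm: "admissible a b \<alpha> \<beta> ya yb G \<xi> y"
    and \<eta>1: "test_function a b \<eta>1" and \<eta>2: "test_function a b \<eta>2"
    and constraint: "frac_functional G (\<lambda>s. y s + e1 * \<eta>1 s + e2 * \<eta>2 s) = \<xi>"
  shows "admissible a b \<alpha> \<beta> ya yb G \<xi> (\<lambda>s. y s + e1 * \<eta>1 s + e2 * \<eta>2 s)"
proof -
  have y: "C1_interval a b y" and cD: "continuous_on {a..b} (lCD \<beta> a y)" and "y a = ya" "y b = yb"
    using adm unfolding admissible_def by auto
  obtain y' where dy: "\<forall>t\<in>{a..b}. (y has_real_derivative y' t) (at t within {a..b})"
    and cy': "continuous_on {a..b} y'"
    using y unfolding C1_interval_def by blast
  have "C1_interval a b (\<lambda>s. y s + e1 * \<eta>1 s + e2 * \<eta>2 s)"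
    unfolding C1_interval_def
  proof (intro exI[of _ "\<lambda>t. y' t + e1 * deriv \<eta>1 t + e2 * deriv \<eta>2 t"] conjI ballI)
    fix t assume "t \<in> {a..b}"
    then have "(y has_real_derivative y' t) (at t within {a..b})" using dy by blast
    moreover have "(\<eta>1 has_real_derivative deriv \<eta>1 t) (at t within {a..b})"
      by (rule has_field_derivative_at_within[OF test_function_has_real_derivative[OF \<eta>1]])
    moreover have "(\<eta>2 has_real_derivative deriv \<eta>2 t) (at t within {a..b})"
      by (rule has_field_derivative_at_within[OF test_function_has_real_derivative[OF \<eta>2]])
    ultimately show "((\<lambda>s. y s + e1 * \<eta>1 s + e2 * \<eta>2 s) has_real_derivative y' t + e1 * deriv \<eta>1 t + e2 * deriv \<eta>2 t)
        (at t within {a..b})"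
      by (intro DERIV_add DERIV_cmult)
  qed (intro continuous_intros cy' test_function_continuous_deriv[OF \<eta>1] test_function_continuous_deriv[OF \<eta>2])
  moreover have "continuous_on {a..b} (lCD \<beta> a (\<lambda>s. y s + e1 * \<eta>1 s + e2 * \<eta>2 s))"
  proof (rule continuous_on_eq)
    show "continuous_on {a..b} (\<lambda>t. lCD \<beta> a y t + e1 * lCD \<beta> a \<eta>1 t + e2 * lCD \<beta> a \<eta>2 t)"
      by (intro continuous_intros cD continuous_lCD_test_function[OF \<eta>1] continuous_lCD_test_function[OF \<eta>2])
  qed (simp add: lCD_linear_combination[OF y beta(2) \<eta>1 \<eta>2])
  moreover have "\<eta>1 a = 0" "\<eta>2 a = 0" "\<eta>1 b = 0" "\<eta>2 b = 0"
    using test_function_vanishes(1)[OF \<eta>1] test_function_vanishes(1)[OF \<eta>2] by auto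
  ultimately show ?thesis
    using constraint \<open>y a = ya\<close> \<open>y b = yb\<close> unfolding admissible_def frac_functional_def by simp
qed

lemma first_variations_proportional:
  assumes F: "C1_3 {a..b} F" and G: "C1_3 {a..b} G"
    and adm: "admissible a b \<alpha> \<beta> ya yb G \<xi> y"
    and minimal: "\<And>z. admissible a b \<alpha> \<beta> ya yb G \<xi> z \<Longrightarrow> frac_functional F y \<le> frac_functional F z"
    and \<eta>1: "test_function a b \<eta>1" and \<eta>2: "test_function a b \<eta>2"
    and "first_variation G y \<eta>2 \<noteq> 0"
  shows "first_variation F y \<eta>1 * first_variation G y \<eta>2 = first_variation F y \<eta>2 * first_variation G y \<eta>1"
proof -
  have y: "C1_interval a b y" "continuous_on {a..b} (lCD \<beta> a y)" and "frac_functional G y = \<xi>"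
    using adm unfolding admissible_def frac_functional_def by auto
  note approx_F = frac_functional_linear_approx[OF F y \<eta>1 \<eta>2]
  note approx_G = frac_functional_linear_approx[OF G y \<eta>1 \<eta>2, unfolded \<open>frac_functional G y = \<xi>\<close>]
  show ?thesis
    using minimal admissible_perturbation[OF adm \<eta>1 \<eta>2]
    by (intro lagrange_multiplier_two_parameters[OF approx_F approx_G
          frac_functional_continuous_second[OF G y \<eta>1 \<eta>2]] \<open>first_variation G y \<eta>2 \<noteq> 0\<close>) blast
qed

lemma first_variation_eq_integral_euler_lagrange:
  assumes L: "C1_3 {a..b} L" and y: "continuous_on {a..b} y" "continuous_on {a..b} (lCD \<beta> a y)"
    and reg: "euler_lagrange_regular L y" and \<eta>: "test_function a b \<eta>"
  shows "first_variation L y \<eta> = integral {a..b} (\<lambda>t. \<eta> t * euler_lagrange L y t) / Gamma \<alpha>"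
proof -
  define g where "g = (\<lambda>\<tau>. (b - \<tau>) powr (\<alpha> - 1) * d3 L \<tau> (y \<tau>) (lCD \<beta> a y \<tau>))"
  have c2: "continuous_on {a..b} (\<lambda>t. d2 L t (y t) (lCD \<beta> a y t))"
    by (rule continuous_on_compose_slab[OF C1_3_continuous_d2[OF L] y])
  have c3: "continuous_on {a..b} (\<lambda>t. d3 L t (y t) (lCD \<beta> a y t))"
    by (rule continuous_on_compose_slab[OF C1_3_continuous_d3[OF L] y])
  have R_diff: "\<And>t. t \<in> {a<..<b} \<Longrightarrow> rRLI (1 - \<beta>) b g differentiable (at t)"
    and D_cont: "continuous_on {a<..<b} (rRLD \<beta> b g)"
    using reg unfolding euler_lagrange_regular_def g_def by auto
  have int1: "(\<lambda>t. (b - t) powr (\<alpha> - 1) * (d2 L t (y t) (lCD \<beta> a y t) * \<eta> t)) integrable_on {a..b}"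
    by (intro integrable_weight_mult continuous_intros c2 test_function_continuous[OF \<eta>])
  have int2: "(\<lambda>t. (b - t) powr (\<alpha> - 1) * (d3 L t (y t) (lCD \<beta> a y t) * lCD \<beta> a \<eta> t)) integrable_on {a..b}"
    by (intro integrable_weight_mult continuous_intros c3 continuous_lCD_test_function[OF \<eta>])
  have int3: "(\<lambda>t. \<eta> t * rRLD \<beta> b g t) integrable_on {a..b}"
    by (rule integrable_test_function_mult[OF \<eta> D_cont])
  have "integral {a..b} (\<lambda>t. (b - t) powr (\<alpha> - 1) * (d2 L t (y t) (lCD \<beta> a y t) * \<eta> t
        + d3 L t (y t) (lCD \<beta> a y t) * lCD \<beta> a \<eta> t))
      = integral {a..b} (\<lambda>t. (b - t) powr (\<alpha> - 1) * (d2 L t (y t) (lCD \<beta> a y t) * \<eta> t))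
      + integral {a..b} (\<lambda>t. g t * lCD \<beta> a \<eta> t)"
    unfolding distrib_left integral_add[OF int1 int2] by (simp add: g_def mult.assoc)
  then have "first_variation L y \<eta> = (integral {a..b} (\<lambda>t. (b - t) powr (\<alpha> - 1) * (d2 L t (y t) (lCD \<beta> a y t) * \<eta> t))
      + integral {a..b} (\<lambda>t. g t * lCD \<beta> a \<eta> t)) / Gamma \<alpha>"
    unfolding first_variation_def lRLI_def by simp
  also have "integral {a..b} (\<lambda>t. g t * lCD \<beta> a \<eta> t) = integral {a..b} (\<lambda>t. \<eta> t * rRLD \<beta> b g t)"
    by (rule fractional_integration_by_parts[OF a_less_b alpha beta c3 _ \<eta> R_diff D_cont]) (simp add: g_def)
  also have "integral {a..b} (\<lambda>t. (b - t) powr (\<alpha> - 1) * (d2 L t (y t) (lCD \<beta> a y t) * \<eta> t))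
      + integral {a..b} (\<lambda>t. \<eta> t * rRLD \<beta> b g t) = integral {a..b} (\<lambda>t. \<eta> t * euler_lagrange L y t)"
  proof -
    have "euler_lagrange L y t = (b - t) powr (\<alpha> - 1) * d2 L t (y t) (lCD \<beta> a y t) + rRLD \<beta> b g t" for t
      unfolding euler_lagrange_def g_def ..
    then show ?thesis
      unfolding integral_add[OF int1 int3, symmetric] by (intro integral_cong) (simp add: algebra_simps)
  qed
  finally show ?thesis .
qed

lemma rRLI_eq_integral:
  "rRLI (1 - \<beta>) b f s = integral {s..b} (\<lambda>\<tau>. (\<tau> - s) powr (-\<beta>) * f \<tau>) / Gamma (1 - \<beta>)"
  unfolding rRLI_def by simp

lemma integrable_right_kernel_weighted:
  assumes s: "s \<in> {a<..<b}" and \<phi>: "continuous_on {a..b} \<phi>"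
  shows "(\<lambda>\<tau>. (\<tau> - s) powr (-\<beta>) * ((b - \<tau>) powr (\<alpha> - 1) * \<phi> \<tau>)) integrable_on {s..b}"
proof -
  have "continuous_on {s..b} \<phi>" using s by (intro continuous_on_subset[OF \<phi>]) auto
  then show ?thesis
    using absolutely_integrable_two_singular_kernels[of s b \<alpha> \<beta> \<phi>] s alpha beta
    by (simp add: absolutely_integrable_on_def)
qed

lemma rRLI_weighted_diff:
  assumes s: "s \<in> {a<..<b}" and \<phi>: "continuous_on {a..b} \<phi>" and \<psi>: "continuous_on {a..b} \<psi>"
    and \<theta>: "\<And>\<tau>. \<tau> \<in> {a..b} \<Longrightarrow> \<theta> \<tau> = \<phi> \<tau> - c * \<psi> \<tau>"
  shows "rRLI (1 - \<beta>) b (\<lambda>\<tau>. (b - \<tau>) powr (\<alpha> - 1) * \<theta> \<tau>) s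
    = rRLI (1 - \<beta>) b (\<lambda>\<tau>. (b - \<tau>) powr (\<alpha> - 1) * \<phi> \<tau>) s
      - c * rRLI (1 - \<beta>) b (\<lambda>\<tau>. (b - \<tau>) powr (\<alpha> - 1) * \<psi> \<tau>) s"
proof -
  have "integral {s..b} (\<lambda>\<tau>. (\<tau> - s) powr (-\<beta>) * ((b - \<tau>) powr (\<alpha> - 1) * \<theta> \<tau>))
      = integral {s..b} (\<lambda>\<tau>. (\<tau> - s) powr (-\<beta>) * ((b - \<tau>) powr (\<alpha> - 1) * \<phi> \<tau>)
          - c * ((\<tau> - s) powr (-\<beta>) * ((b - \<tau>) powr (\<alpha> - 1) * \<psi> \<tau>)))"
    by (rule integral_cong) (use s in \<open>auto simp: \<theta> algebra_simps\<close>)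
  also have "\<dots> = integral {s..b} (\<lambda>\<tau>. (\<tau> - s) powr (-\<beta>) * ((b - \<tau>) powr (\<alpha> - 1) * \<phi> \<tau>))
      - c * integral {s..b} (\<lambda>\<tau>. (\<tau> - s) powr (-\<beta>) * ((b - \<tau>) powr (\<alpha> - 1) * \<psi> \<tau>))"
    using integrable_right_kernel_weighted[OF s \<phi>] integrable_on_mult_right[OF integrable_right_kernel_weighted[OF s \<psi>]]
    by (simp add: integral_diff)
  finally show ?thesis unfolding rRLI_eq_integral by (simp add: diff_divide_distrib)
qed

lemma euler_lagrange_diff_scaled:
  assumes F: "C1_3 {a..b} F" and G: "C1_3 {a..b} G"
    and y: "continuous_on {a..b} y" "continuous_on {a..b} (lCD \<beta> a y)"
    and regF: "euler_lagrange_regular F y" and regG: "euler_lagrange_regular G y" and t: "t \<in> {a<..<b}"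
  shows "euler_lagrange (\<lambda>s x v. F s x v - c * G s x v) y t = euler_lagrange F y t - c * euler_lagrange G y t"
proof -
  define RF where "RF = rRLI (1 - \<beta>) b (\<lambda>\<tau>. (b - \<tau>) powr (\<alpha> - 1) * d3 F \<tau> (y \<tau>) (lCD \<beta> a y \<tau>))"
  define RG where "RG = rRLI (1 - \<beta>) b (\<lambda>\<tau>. (b - \<tau>) powr (\<alpha> - 1) * d3 G \<tau> (y \<tau>) (lCD \<beta> a y \<tau>))"
  define RH where "RH = rRLI (1 - \<beta>) b
    (\<lambda>\<tau>. (b - \<tau>) powr (\<alpha> - 1) * d3 (\<lambda>s x v. F s x v - c * G s x v) \<tau> (y \<tau>) (lCD \<beta> a y \<tau>))"
  have RH: "RH s = RF s - c * RG s" if "s \<in> {a<..<b}" for s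
    unfolding RF_def RG_def RH_def
    by (rule rRLI_weighted_diff[OF that continuous_on_compose_slab[OF C1_3_continuous_d3[OF F] y]
          continuous_on_compose_slab[OF C1_3_continuous_d3[OF G] y]])
      (simp add: d3_diff_scaled[OF F G])
  have "(RF has_real_derivative deriv RF t) (at t)" "(RG has_real_derivative deriv RG t) (at t)"
    using regF regG t unfolding euler_lagrange_regular_def RF_def RG_def
    by (simp_all add: DERIV_deriv_iff_real_differentiable)
  then have "((\<lambda>s. RF s - c * RG s) has_real_derivative deriv RF t - c * deriv RG t) (at t)"
    by (intro DERIV_diff DERIV_cmult)
  then have "(RH has_real_derivative deriv RF t - c * deriv RG t) (at t)"
    by (rule has_field_derivative_transform_within_open[OF _ open_greaterThanLessThan t]) (simp add: RH)
  then have deriv_RH: "deriv RH t = deriv RF t - c * deriv RG t" by (rule DERIV_imp_deriv)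
  have d2_H: "d2 (\<lambda>s x v. F s x v - c * G s x v) t (y t) (lCD \<beta> a y t)
      = d2 F t (y t) (lCD \<beta> a y t) - c * d2 G t (y t) (lCD \<beta> a y t)"
    using t by (intro d2_diff_scaled[OF F G]) auto
  show ?thesis
    unfolding euler_lagrange_def rRLD_def RF_def[symmetric] RG_def[symmetric] RH_def[symmetric] deriv_RH d2_H
    by (simp add: algebra_simps)
qed

lemma lagrange_multiplier_euler_lagrange:
  assumes F: "C1_3 {a..b} F" and G: "C1_3 {a..b} G"
    and adm: "admissible a b \<alpha> \<beta> ya yb G \<xi> y"
    and minimal: "\<And>z. admissible a b \<alpha> \<beta> ya yb G \<xi> z \<Longrightarrow> frac_functional F y \<le> frac_functional F z"
    and regF: "euler_lagrange_regular F y" and regG: "euler_lagrange_regular G y"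
    and t0: "t0 \<in> {a<..<b}" "euler_lagrange G y t0 \<noteq> 0"
  obtains lam where "\<And>t. t \<in> {a<..<b} \<Longrightarrow> euler_lagrange F y t = lam * euler_lagrange G y t"
proof -
  have y: "continuous_on {a..b} y" "continuous_on {a..b} (lCD \<beta> a y)"
    using adm C1_interval_continuous unfolding admissible_def by auto
  have EF: "continuous_on {a<..<b} (euler_lagrange F y)" and EG: "continuous_on {a<..<b} (euler_lagrange G y)"
    using regF regG by (simp_all add: continuous_on_euler_lagrange)
  have "0 < Gamma \<alpha>" using alpha(1) by (rule Gamma_real_pos)
  have variation: "first_variation L y \<eta> = integral {a..b} (\<lambda>t. \<eta> t * euler_lagrange L y t) / Gamma \<alpha>"
    if "L = F \<or> L = G" "test_function a b \<eta>" for L \<eta>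
    using that first_variation_eq_integral_euler_lagrange[OF F y regF] first_variation_eq_integral_euler_lagrange[OF G y regG]
    by auto
  obtain c0 r0 where bump0: "0 < r0" "a < c0 - r0" "c0 + r0 < b"
    and "integral {a..b} (\<lambda>t. bump c0 r0 t * euler_lagrange G y t) \<noteq> 0"
    using exists_bump_integral_nonzero[OF EG t0] by blast
  then have \<eta>0: "test_function a b (bump c0 r0)" and "first_variation G y (bump c0 r0) \<noteq> 0"
    using test_function_bump[OF bump0] variation[of G "bump c0 r0"] \<open>0 < Gamma \<alpha>\<close> by auto
  define lam where "lam = first_variation F y (bump c0 r0) / first_variation G y (bump c0 r0)"
  show ?thesis
  proof (rule that[of lam], rule ccontr)
    fix t assume t: "t \<in> {a<..<b}" and "euler_lagrange F y t \<noteq> lam * euler_lagrange G y t"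
    define E where "E s = euler_lagrange F y s - lam * euler_lagrange G y s" for s
    have "continuous_on {a<..<b} E" unfolding E_def by (intro continuous_intros EF EG)
    moreover have "E t \<noteq> 0" using \<open>euler_lagrange F y t \<noteq> lam * euler_lagrange G y t\<close> by (simp add: E_def)
    ultimately obtain c r where bump: "0 < r" "a < c - r" "c + r < b"
      and nonzero: "integral {a..b} (\<lambda>s. bump c r s * E s) \<noteq> 0"
      using exists_bump_integral_nonzero[OF _ t] by blast
    have \<eta>: "test_function a b (bump c r)" by (rule test_function_bump[OF bump])
    have "(\<lambda>s. bump c r s * E s)
        = (\<lambda>s. bump c r s * euler_lagrange F y s - lam * (bump c r s * euler_lagrange G y s))"
      by (simp add: E_def algebra_simps)
    then have "integral {a..b} (\<lambda>s. bump c r s * E s) = integral {a..b} (\<lambda>s. bump c r s * euler_lagrange F y s)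
        - lam * integral {a..b} (\<lambda>s. bump c r s * euler_lagrange G y s)"
      using integrable_test_function_mult[OF \<eta> EF] integrable_on_mult_right[OF integrable_test_function_mult[OF \<eta> EG]]
      by (simp add: integral_diff)
    then have "first_variation F y (bump c r) - lam * first_variation G y (bump c r)
        = integral {a..b} (\<lambda>s. bump c r s * E s) / Gamma \<alpha>"
      by (simp add: variation \<eta> diff_divide_distrib)
    moreover have "first_variation F y (bump c r) * first_variation G y (bump c0 r0)
        = first_variation F y (bump c0 r0) * first_variation G y (bump c r)"
      by (rule first_variations_proportional[OF F G adm minimal \<eta> \<eta>0 \<open>first_variation G y (bump c0 r0) \<noteq> 0\<close>])
    then have "first_variation F y (bump c r) - lam * first_variation G y (bump c r) = 0"
      using \<open>first_variation G y (bump c0 r0) \<noteq> 0\<close> by (simp add: lam_def field_simps)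
    ultimately show False using nonzero \<open>0 < Gamma \<alpha>\<close> by simp
  qed
qed

end

theorem mainTheorem13:
  fixes a b alpha beta xi ya yb :: real
    and F G :: "real \<Rightarrow> real \<Rightarrow> real \<Rightarrow> real"
    and y :: "real \<Rightarrow> real"
  assumes ab: "a < b"
    and alpha: "0 < alpha" "alpha < 1"
    and beta: "0 < beta" "beta < 1"
    and F_C1: "C1_3 {a..b} F"
    and G_C1: "C1_3 {a..b} G"
    and adm: "admissible a b alpha beta ya yb G xi y"
    and minimizer: "\<forall>z. admissible a b alpha beta ya yb G xi z \<longrightarrow>
        lRLI alpha a (\<lambda>t. F t (y t) (lCD beta a y t)) b
          \<le> lRLI alpha a (\<lambda>t. F t (z t) (lCD beta a z t)) b"
    and regularity: "\<forall>L\<in>{F, G}.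
        let g = (\<lambda>t. (b - t) powr (alpha - 1) * d3 L t (y t) (lCD beta a y t)) in
        continuous_on {a<..<b} (\<lambda>t. (b - t) powr (alpha - 1) * d2 L t (y t) (lCD beta a y t)) \<and>
        (\<forall>t\<in>{a<..<b}. (\<lambda>s. rRLI (1 - beta) b g s) differentiable (at t)) \<and>
        continuous_on {a<..<b} (rRLD beta b g) \<and>
        abs_cont_on a b (rRLI (1 - beta) b g) \<and>
        (((\<lambda>(t, \<tau>). ((t - \<tau>) powr (- beta) / Gamma (1 - beta))\<^sup>2)
             integrable_on {(t, \<tau>). a \<le> \<tau> \<and> \<tau> < t \<and> t \<le> b} \<and>
          g measurable_on {a..b} \<and> (\<lambda>t. (g t)\<^sup>2) integrable_on {a..b})
         \<or> continuous_on {a..b} g)"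
    and not_extremal: "\<not> (\<forall>t\<in>{a<..<b}.
        (b - t) powr (alpha - 1) * d2 G t (y t) (lCD beta a y t)
        + rRLD beta b (\<lambda>\<tau>. (b - \<tau>) powr (alpha - 1) * d3 G \<tau> (y \<tau>) (lCD beta a y \<tau>)) t = 0)"
  shows "\<exists>lam::real. \<forall>t\<in>{a<..<b}.
     (let H = (\<lambda>s x v. F s x v - lam * G s x v) in
      (b - t) powr (alpha - 1) * d2 H t (y t) (lCD beta a y t)
      + rRLD beta b (\<lambda>\<tau>. (b - \<tau>) powr (alpha - 1) * d3 H \<tau> (y \<tau>) (lCD beta a y \<tau>)) t = 0)"
proof -
  interpret fractional_problem a b alpha beta
    using ab alpha beta by unfold_locales
  have "\<forall>L\<in>{F, G}. euler_lagrange_regular L y"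
    using regularity unfolding euler_lagrange_regular_def Let_def by blast
  then have reg: "euler_lagrange_regular F y" "euler_lagrange_regular G y" by simp_all
  have y: "continuous_on {a..b} y" "continuous_on {a..b} (lCD beta a y)"
    using adm C1_interval_continuous unfolding admissible_def by auto
  obtain t0 where "t0 \<in> {a<..<b}" "euler_lagrange G y t0 \<noteq> 0"
    using not_extremal unfolding euler_lagrange_def by blast
  then obtain lam where lam: "\<And>t. t \<in> {a<..<b} \<Longrightarrow> euler_lagrange F y t = lam * euler_lagrange G y t"
    using lagrange_multiplier_euler_lagrange[OF F_C1 G_C1 adm _ reg] minimizer
    unfolding frac_functional_def by blast
  show ?thesis
  proof (intro exI[of _ lam] ballI)
    fix t assume t: "t \<in> {a<..<b}"
    show "let H = (\<lambda>s x v. F s x v - lam * G s x v) in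
      (b - t) powr (alpha - 1) * d2 H t (y t) (lCD beta a y t)
      + rRLD beta b (\<lambda>\<tau>. (b - \<tau>) powr (alpha - 1) * d3 H \<tau> (y \<tau>) (lCD beta a y \<tau>)) t = 0"
      using euler_lagrange_diff_scaled[OF F_C1 G_C1 y reg t, of lam] lam[OF t]
      unfolding Let_def euler_lagrange_def by simp
  qed
qed

end
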